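(* For every $\epsilon>0$ there is $L_0$ such that the following holds. Let $V$ be a distinguished positive vector such that $V/\|V\|$ lies in a loop level set of period $L>L_0$, and write $E(V)=(a,b,c)$. Then $0<b<2+\epsilon$.
   Context: $\mathrm{Sol}$ is $\mathbb{R}^3$ with metric $e^{-2z}dx^2+e^{2z}dy^2+dz^2$ and group law $(x,y,z)*(a,b,c)=(e^za+x,e^{-z}b+y,c+z)$; $E$ is the Riemannian exponential map at the origin (tangent space identified with $\mathbb{R}^3$). Let $\Sigma(x,y,z)=(xz,-yz,-x^2+y^2)$, a vector field tangent to the unit sphere $S^2$, with flow $\Phi_s$. For $V\ne0$ the flowline of $V$ is $s\mapsto\Phi_s(V/\|V\|)$, $s\in[0,\|V\|]$. A vector is positive if all three coordinates are positive. For $c\in(0,1/2)$, the set $\{(x,y,z)\in S^2: x,y>0,\ xy=c\}$ is a loop level set; it is a closed orbit of $\Phi$ and its period (time to go once around) is $L_\alpha=\pi/\mathrm{AGM}(\alpha,\tfrac12\sqrt{1+2\alpha^2})$ with $\alpha=\sqrt c$. A flowline is symmetric if its endpoints have the form $(p,q,w)$ and $(p,q,-w)$. A small symmetric flowline is a symmetric flowline of a vector $W$ with $W/\|W\|$ in a loop level set of period $L$ and $\|W\|<L$. A vector $V$ is distinguished if there is $\lambda\ge1$ such that the flowline of $\lambda V$ is a small symmetric flowline. *)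

theory Defs
  imports "HOL-Analysis.Analysis"
begin

type_synonym vec3 = "real \<times> real \<times> real"

text \<open>Euclidean coordinates; note that norm on real \<times> real \<times> real is the Euclidean norm.\<close>

text \<open>Geodesic equation of Sol with metric exp(-2z)dx^2 + exp(2z)dy^2 + dz^2:
  x'' = 2 x' z',  y'' = -2 y' z',  z'' = - exp(-2z) x'^2 + exp(2z) y'^2.\<close>
definition sol_geo_acc :: "vec3 \<Rightarrow> vec3 \<Rightarrow> vec3" where
  "sol_geo_acc p v = (case p of (x,y,z) \<Rightarrow> case v of (u,w,r) \<Rightarrow>
     (2*u*r, -(2*w*r), -(exp (-(2*z)) * u^2) + exp (2*z) * w^2))"

text \<open>Riemannian exponential map of Sol at the origin: E(V) = gamma(1) for the geodesic
  gamma with gamma(0) = 0, gamma'(0) = V (Sol is complete, so gamma is defined on all of R).\<close>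
definition sol_exp :: "vec3 \<Rightarrow> vec3" where
  "sol_exp V = (THE q. \<exists>\<gamma> \<gamma>'. \<gamma> 0 = 0 \<and> \<gamma>' 0 = V \<and>
      (\<forall>t. (\<gamma> has_vector_derivative \<gamma>' t) (at t) \<and>
           (\<gamma>' has_vector_derivative sol_geo_acc (\<gamma> t) (\<gamma>' t)) (at t)) \<and>
      \<gamma> 1 = q)"

definition Sigma_field :: "vec3 \<Rightarrow> vec3" where
  "Sigma_field p = (case p of (x,y,z) \<Rightarrow> (x*z, -(y*z), -(x^2) + y^2))"

text \<open>Flow Phi_s of Sigma (global, since Sigma preserves the Euclidean norm).\<close>
definition Sigma_flow :: "real \<Rightarrow> vec3 \<Rightarrow> vec3" where
  "Sigma_flow s p = (THE q. \<exists>u. u 0 = p \<and>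
      (\<forall>t. (u has_vector_derivative Sigma_field (u t)) (at t)) \<and> u s = q)"

definition unit_vec :: "vec3 \<Rightarrow> vec3" where
  "unit_vec V = (1 / norm V) *\<^sub>R V"

definition positive_vec :: "vec3 \<Rightarrow> bool" where
  "positive_vec V = (case V of (x,y,z) \<Rightarrow> x > 0 \<and> y > 0 \<and> z > 0)"

definition loop_level_set :: "real \<Rightarrow> vec3 set" where
  "loop_level_set c = {(x,y,z). x^2 + y^2 + z^2 = 1 \<and> x > 0 \<and> y > 0 \<and> x*y = c}"

fun agm_seq :: "real \<Rightarrow> real \<Rightarrow> nat \<Rightarrow> real \<times> real" where
  "agm_seq a b 0 = (a, b)"
| "agm_seq a b (Suc n) = (case agm_seq a b n of (x,y) \<Rightarrow> ((x+y)/2, sqrt (x*y)))"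

definition agm :: "real \<Rightarrow> real \<Rightarrow> real" where
  "agm a b = lim (\<lambda>n. fst (agm_seq a b n))"

definition loop_period :: "real \<Rightarrow> real" where
  "loop_period c = pi / agm (sqrt c) (sqrt (1 + 2 * (sqrt c)^2) / 2)"

definition flow_start :: "vec3 \<Rightarrow> vec3" where
  "flow_start W = unit_vec W"

definition flow_end :: "vec3 \<Rightarrow> vec3" where
  "flow_end W = Sigma_flow (norm W) (unit_vec W)"

definition symmetric_flowline :: "vec3 \<Rightarrow> bool" where
  "symmetric_flowline W \<longleftrightarrow> W \<noteq> 0 \<and>
     fst (flow_start W) = fst (flow_end W) \<and>
     fst (snd (flow_start W)) = fst (snd (flow_end W)) \<and>
     snd (snd (flow_end W)) = - snd (snd (flow_start W))"

definition small_symmetric_flowline :: "vec3 \<Rightarrow> bool" where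
  "small_symmetric_flowline W \<longleftrightarrow> W \<noteq> 0 \<and> symmetric_flowline W \<and>
     (\<exists>c. 0 < c \<and> c < 1/2 \<and> unit_vec W \<in> loop_level_set c \<and> norm W < loop_period c)"

definition distinguished :: "vec3 \<Rightarrow> bool" where
  "distinguished V \<longleftrightarrow> (\<exists>l::real. l \<ge> 1 \<and> small_symmetric_flowline (l *\<^sub>R V))"

end

theory Submission
  imports Defs
begin

(*
  Read in the left-invariant frame of Sol, the velocity of a geodesic is an integral curve of
  Sigma. So the geodesic with initial velocity V = s p, with p on the loop xy = k, is obtained by
  integrating the Sigma-orbit of p, which is explicit in an angle theta on the loop (time along
  the orbit is an incomplete elliptic integral in theta). In particular the y-coordinate of E(V)
  is (H(T) - H(theta_0)) / y_0, with H a primitive of y^2 / (dtheta/dt) along the loop and T the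
  angle reached at time s. For a distinguished V the symmetric small flowline forces
  T <= 2 pi - theta_0, so by the reflection symmetry of H the y-coordinate is at most
  2 (H(pi) - H(theta_0)) / y_0, and an explicit majorant of H(pi) - H(theta) bounds this by
  2 + 32 k when k <= 1/4. Finally, by Landen's transformation the AGM formula for the period is a
  lower bound for the time of one revolution, which is at most pi / sqrt k; so a long period
  forces k to be small.
*)

definition primitive :: "(real \<Rightarrow> real) \<Rightarrow> real \<Rightarrow> real" where
  "primitive f x = (if 0 \<le> x then integral {0..x} f else - integral {x..0} f)"

lemma primitive_0 [simp]: "primitive f 0 = 0"
  by (simp add: primitive_def)

lemma primitive_has_real_derivative:
  assumes "continuous_on UNIV f"
  shows "(primitive f has_real_derivative f x) (at x)"
proof -
  define n where "n = \<bar>x\<bar> + 1"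
  have n: "-n < x" "x < n" "0 < n" using n_def by auto
  have cont: "continuous_on {-n..n} f" using assms continuous_on_subset by blast
  have int: "f integrable_on {-n..n}" using cont integrable_continuous_real by blast
  have eq: "primitive f y = integral {-n..y} f - integral {-n..0} f" if "y \<in> {-n..n}" for y
  proof (cases "0 \<le> y")
    case True
    have "integral {-n..0} f + integral {0..y} f = integral {-n..y} f"
      by (rule Henstock_Kurzweil_Integration.integral_combine)
        (use True that n in \<open>auto intro: integrable_on_subinterval[OF int]\<close>)
    then show ?thesis using True by (simp add: primitive_def)
  next
    case False
    have "integral {-n..y} f + integral {y..0} f = integral {-n..0} f"
      by (rule Henstock_Kurzweil_Integration.integral_combine)
        (use False that n in \<open>auto intro: integrable_on_subinterval[OF int]\<close>)
    then show ?thesis using False by (simp add: primitive_def algebra_simps)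
  qed
  have "((\<lambda>y. integral {-n..y} f - integral {-n..0} f) has_real_derivative f x)
    (at x within {-n..n})"
    using integral_has_real_derivative[OF cont, of x] n by (auto intro!: derivative_eq_intros)
  then have "((\<lambda>y. integral {-n..y} f - integral {-n..0} f) has_real_derivative f x) (at x)"
    using n by (subst (asm) at_within_interior) (auto simp: interior_atLeastAtMost_real)
  then show ?thesis
    by (rule has_field_derivative_transform_within_open[where S="{-n<..<n}"]) (use eq n in auto)
qed

lemma has_real_derivative_eq_imp_eq:
  assumes "\<And>t. (f has_real_derivative d t) (at t)" "\<And>t. (g has_real_derivative d t) (at t)"
    and "f 0 = g 0"
  shows "f t = g t"
proof -
  have "\<forall>t. ((\<lambda>t. f t - g t) has_real_derivative 0) (at t)"
    using assms(1,2) by (auto intro!: derivative_eq_intros)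
  from DERIV_isconst_all[OF this, of t 0] assms(3) show ?thesis by simp
qed

lemma Gronwall_vanishing:
  fixes g g' :: "real \<Rightarrow> real"
  assumes "\<And>s. (g has_real_derivative g' s) (at s)" and "\<And>s. \<bar>g' s\<bar> \<le> K * g s"
    and "\<And>s. 0 \<le> g s" and "g 0 = 0"
  shows "g t = 0"
proof (cases "0 \<le> t")
  case True
  define h where "h s = exp (- K * s) * g s" for s
  have "h t \<le> h 0"
  proof (rule DERIV_nonpos_imp_nonincreasing[OF True])
    fix x
    have "(h has_real_derivative exp (- K * x) * (g' x - K * g x)) (at x)"
      unfolding h_def[abs_def] using assms(1)[of x]
      by (auto intro!: derivative_eq_intros simp: algebra_simps)
    moreover have "exp (- K * x) * (g' x - K * g x) \<le> 0"
      using assms(2)[of x] by (intro mult_nonneg_nonpos) auto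
    ultimately show "\<exists>y. (h has_real_derivative y) (at x) \<and> y \<le> 0" by blast
  qed
  then have "exp (- K * t) * g t \<le> 0" using assms(4) unfolding h_def by simp
  then show ?thesis using assms(3)[of t] by (simp add: mult_le_0_iff)
next
  case False
  define h where "h s = exp (K * s) * g s" for s
  have "h t \<le> h 0"
  proof (rule DERIV_nonneg_imp_nondecreasing[of t 0 h])
    show "t \<le> 0" using False by simp
    fix x
    have "(h has_real_derivative exp (K * x) * (g' x + K * g x)) (at x)"
      unfolding h_def[abs_def] using assms(1)[of x]
      by (auto intro!: derivative_eq_intros simp: algebra_simps)
    moreover have "exp (K * x) * (g' x + K * g x) \<ge> 0"
      using assms(2)[of x] by (intro mult_nonneg_nonneg) auto
    ultimately show "\<exists>y. (h has_real_derivative y) (at x) \<and> y \<ge> 0" by blast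
  qed
  then have "exp (K * t) * g t \<le> 0" using assms(4) unfolding h_def by simp
  then show ?thesis using assms(3)[of t] by (simp add: mult_le_0_iff)
qed

lemma sqrt_has_real_derivative:
  assumes "(f has_real_derivative f') (at x)" "f x > 0"
  shows "((\<lambda>x. sqrt (f x)) has_real_derivative f' / (2 * sqrt (f x))) (at x)"
  using DERIV_chain2[OF DERIV_real_sqrt[OF assms(2)] assms(1)] by (simp add: field_simps)

lemma has_vector_derivative_fst:
  assumes "(u has_vector_derivative p) (at t)"
  shows "((\<lambda>t. fst (u t)) has_vector_derivative fst p) (at t)"
  using has_derivative_fst[OF assms[unfolded has_vector_derivative_def]]
  by (simp add: has_vector_derivative_def)

lemma has_vector_derivative_snd:
  assumes "(u has_vector_derivative p) (at t)"
  shows "((\<lambda>t. snd (u t)) has_vector_derivative snd p) (at t)"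
  using has_derivative_snd[OF assms[unfolded has_vector_derivative_def]]
  by (simp add: has_vector_derivative_def)

lemma has_vector_derivative_triple_D:
  assumes "(u has_vector_derivative p) (at t)"
  shows "((\<lambda>t. fst (u t)) has_real_derivative fst p) (at t)"
    and "((\<lambda>t. fst (snd (u t))) has_real_derivative fst (snd p)) (at t)"
    and "((\<lambda>t. snd (snd (u t))) has_real_derivative snd (snd p)) (at t)"
  using has_vector_derivative_fst[OF assms]
    has_vector_derivative_fst[OF has_vector_derivative_snd[OF assms]]
    has_vector_derivative_snd[OF has_vector_derivative_snd[OF assms]]
  by (auto simp: has_real_derivative_iff_has_vector_derivative)

lemma has_vector_derivative_tripleI:
  assumes "(f has_real_derivative p) (at t)" "(g has_real_derivative q) (at t)"
    and "(h has_real_derivative r) (at t)"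
  shows "((\<lambda>t. (f t, g t, h t)) has_vector_derivative (p, q, r)) (at t)"
  using assms
  by (auto simp: has_real_derivative_iff_has_vector_derivative intro!: has_vector_derivative_Pair)

definition Sigma_integral_curve :: "(real \<Rightarrow> vec3) \<Rightarrow> bool" where
  "Sigma_integral_curve u \<longleftrightarrow> (\<forall>t. (u has_vector_derivative Sigma_field (u t)) (at t))"

lemma Sigma_field_eq:
  "Sigma_field p =
    (fst p * snd (snd p), - (fst (snd p) * snd (snd p)), - (fst p ^ 2) + fst (snd p) ^ 2)"
  by (cases p) (simp add: Sigma_field_def)

lemma Sigma_integral_curve_component_D:
  assumes "Sigma_integral_curve u"
  shows "((\<lambda>t. fst (u t)) has_real_derivative fst (u t) * snd (snd (u t))) (at t)"
    and "((\<lambda>t. fst (snd (u t))) has_real_derivative - (fst (snd (u t)) * snd (snd (u t)))) (at t)"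
    and "((\<lambda>t. snd (snd (u t))) has_real_derivative - (fst (u t) ^ 2) + fst (snd (u t)) ^ 2) (at t)"
  using has_vector_derivative_triple_D
    [OF assms[unfolded Sigma_integral_curve_def, rule_format, of t, unfolded Sigma_field_eq]]
  by auto

lemma Sigma_integral_curve_norm_const:
  assumes "Sigma_integral_curve u"
  shows "fst (u t)^2 + fst (snd (u t))^2 + snd (snd (u t))^2
       = fst (u 0)^2 + fst (snd (u 0))^2 + snd (snd (u 0))^2"
proof -
  have "\<forall>t. ((\<lambda>t. fst (u t)^2 + fst (snd (u t))^2 + snd (snd (u t))^2) has_real_derivative 0)
    (at t)"
    using Sigma_integral_curve_component_D[OF assms]
    by (auto intro!: derivative_eq_intros simp: algebra_simps power2_eq_square)
  then show ?thesis using DERIV_isconst_all by blast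
qed

lemma Sigma_integral_curve_rescale:
  assumes "Sigma_integral_curve u"
  shows "Sigma_integral_curve (\<lambda>t. s *\<^sub>R u (s * t))"
  unfolding Sigma_integral_curve_def
proof
  fix t
  have "((\<lambda>t. s * t) has_vector_derivative s) (at t)"
    using has_real_derivative_iff_has_vector_derivative DERIV_cmult_Id by blast
  from vector_diff_chain_at[OF this] assms
  have "((\<lambda>t. u (s * t)) has_vector_derivative s *\<^sub>R Sigma_field (u (s * t))) (at t)"
    unfolding Sigma_integral_curve_def o_def by blast
  then have "((\<lambda>t. s *\<^sub>R u (s * t)) has_vector_derivative s *\<^sub>R (s *\<^sub>R Sigma_field (u (s * t))))
    (at t)"
    using has_vector_derivative_scaleR[OF DERIV_const] by fastforce
  moreover have "s *\<^sub>R (s *\<^sub>R Sigma_field (u (s * t))) = Sigma_field (s *\<^sub>R u (s * t))"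
    by (cases "u (s * t)") (simp add: Sigma_field_def power2_eq_square algebra_simps)
  ultimately show "((\<lambda>t. s *\<^sub>R u (s * t)) has_vector_derivative Sigma_field (s *\<^sub>R u (s * t))) (at t)"
    by simp
qed

text \<open>With \<open>(a, b, c)\<close> a point of one integral curve and \<open>(x, y, z)\<close> its difference from a point
  of another, the left-hand side is the derivative of the squared distance between the curves.\<close>
lemma Sigma_deviation_bound:
  fixes x y z a b c m :: real
  assumes "\<bar>a\<bar> \<le> m" "\<bar>b\<bar> \<le> m" "\<bar>c\<bar> \<le> m"
  shows "\<bar>2 * (c * (x^2 - y^2) + z * (b * y - a * x))\<bar> \<le> 4 * m * (x^2 + y^2 + z^2)"
proof -
  have cross: "\<bar>z * (e * w)\<bar> \<le> (m * z^2 + m * w^2) / 2" if "\<bar>e\<bar> \<le> m" for e w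
  proof -
    have "\<bar>z * (e * w)\<bar> = \<bar>e\<bar> * \<bar>z * w\<bar>" by (simp add: abs_mult)
    also have "\<dots> \<le> m * ((z^2 + w^2) / 2)"
      using that sum_squares_bound[of "\<bar>z\<bar>" "\<bar>w\<bar>"] by (intro mult_mono) (auto simp: abs_mult)
    finally show ?thesis by (simp add: distrib_left)
  qed
  have "\<bar>2 * (c * (x^2 - y^2) + z * (b * y - a * x))\<bar>
      \<le> 2 * (\<bar>c * (x^2 - y^2)\<bar> + \<bar>z * (b * y)\<bar> + \<bar>z * (a * x)\<bar>)"
    unfolding abs_mult[of 2] right_diff_distrib[of z]
    using abs_triangle_ineq[of "c * (x^2 - y^2)" "z * (b * y) - z * (a * x)"]
      abs_triangle_ineq4[of "z * (b * y)" "z * (a * x)"] by simp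
  also have "\<dots> \<le> 2 * (m * (x^2 + y^2) + (m * z^2 + m * y^2) / 2 + (m * z^2 + m * x^2) / 2)"
    using cross[OF assms(1), of x] cross[OF assms(2), of y] assms(3)
    by (intro mult_left_mono add_mono) (auto simp: abs_mult abs_le_iff intro!: mult_mono)
  also have "\<dots> = 4 * m * (x^2 + y^2 + z^2) - m * (x^2 + y^2 + 2 * z^2)"
    by (simp add: field_simps)
  also have "\<dots> \<le> 4 * m * (x^2 + y^2 + z^2)"
    using assms(1) by simp
  finally show ?thesis .
qed

lemma Sigma_integral_curve_bounded:
  assumes "Sigma_integral_curve v"
  defines "m \<equiv> 1 + fst (v 0)^2 + fst (snd (v 0))^2 + snd (snd (v 0))^2"
  shows "\<bar>fst (v s)\<bar> \<le> m" "\<bar>fst (snd (v s))\<bar> \<le> m" "\<bar>snd (snd (v s))\<bar> \<le> m"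
proof -
  have abs_le: "\<bar>w\<bar> \<le> 1 + w^2" for w :: real
    using sum_squares_bound[of "\<bar>w\<bar>" 1] by (simp add: power2_eq_square)
  show "\<bar>fst (v s)\<bar> \<le> m" "\<bar>fst (snd (v s))\<bar> \<le> m" "\<bar>snd (snd (v s))\<bar> \<le> m"
    using Sigma_integral_curve_norm_const[OF assms(1), of s]
      abs_le[of "fst (v s)"] abs_le[of "fst (snd (v s))"] abs_le[of "snd (snd (v s))"]
    unfolding m_def
    by (smt (verit) zero_le_power2)+
qed

lemma Sigma_integral_curve_unique:
  assumes u: "Sigma_integral_curve u" and v: "Sigma_integral_curve v" and "u 0 = v 0"
  shows "u t = v t"
proof -
  define a1 where "a1 t = fst (u t)" for t
  define b1 where "b1 t = fst (snd (u t))" for t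
  define c1 where "c1 t = snd (snd (u t))" for t
  define a2 where "a2 t = fst (v t)" for t
  define b2 where "b2 t = fst (snd (v t))" for t
  define c2 where "c2 t = snd (snd (v t))" for t
  note du = Sigma_integral_curve_component_D[OF u, folded a1_def b1_def c1_def]
  note dv = Sigma_integral_curve_component_D[OF v, folded a2_def b2_def c2_def]
  define m where "m = 1 + a2 0^2 + b2 0^2 + c2 0^2"
  note bounded = Sigma_integral_curve_bounded[OF v, folded a2_def b2_def c2_def, folded m_def]
  define g where "g s = (a1 s - a2 s)^2 + (b1 s - b2 s)^2 + (c1 s - c2 s)^2" for s
  define g' where "g' s = 2 * (c2 s * ((a1 s - a2 s)^2 - (b1 s - b2 s)^2)
     + (c1 s - c2 s) * (b2 s * (b1 s - b2 s) - a2 s * (a1 s - a2 s)))" for s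
  have "(g has_real_derivative g' s) (at s)" for s
  proof -
    have "(g has_real_derivative
      2 * (a1 s - a2 s) * (a1 s * c1 s - a2 s * c2 s) + 2 * (b1 s - b2 s) *
        (- (b1 s * c1 s) + b2 s * c2 s)
      + 2 * (c1 s - c2 s) * ((- (a1 s^2) + b1 s^2) - (- (a2 s^2) + b2 s^2))) (at s)"
      unfolding g_def[abs_def] using du[of s] dv[of s]
      by (auto intro!: derivative_eq_intros simp: algebra_simps power2_eq_square)
    then show ?thesis unfolding g'_def by (simp add: algebra_simps power2_eq_square)
  qed
  moreover have "\<bar>g' s\<bar> \<le> (4 * m) * g s" for s
    unfolding g'_def g_def
    using Sigma_deviation_bound[OF bounded[of s], of "a1 s - a2 s" "b1 s - b2 s" "c1 s - c2 s"]
    by (simp add: algebra_simps)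
  moreover have "0 \<le> g s" for s unfolding g_def by simp
  moreover have "g 0 = 0"
    using assms(3) unfolding g_def a1_def a2_def b1_def b2_def c1_def c2_def by simp
  ultimately have "g t = 0" by (rule Gronwall_vanishing)
  then show ?thesis
    unfolding g_def a1_def a2_def b1_def b2_def c1_def c2_def
    by (simp add: add_nonneg_eq_0_iff prod_eq_iff)
qed

lemma Sigma_flow_eqI:
  assumes "Sigma_integral_curve u"
  shows "Sigma_flow s (u 0) = u s"
  unfolding Sigma_flow_def
proof (rule the_equality)
  show "\<exists>v. v 0 = u 0 \<and> (\<forall>t. (v has_vector_derivative Sigma_field (v t)) (at t)) \<and> v s = u s"
    using assms unfolding Sigma_integral_curve_def by blast
next
  fix q
  assume "\<exists>v. v 0 = u 0 \<and> (\<forall>t. (v has_vector_derivative Sigma_field (v t)) (at t)) \<and> v s = q"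
  then obtain v where "v 0 = u 0" "Sigma_integral_curve v" "v s = q"
    unfolding Sigma_integral_curve_def by blast
  then show "q = u s" using Sigma_integral_curve_unique[OF _ assms] by metis
qed

section \<open>An incomplete elliptic integral of the first kind\<close>

definition ellipse_norm :: "real \<Rightarrow> real \<Rightarrow> real \<Rightarrow> real" where
  "ellipse_norm a b \<phi> = sqrt (a^2 * (cos \<phi>)^2 + b^2 * (sin \<phi>)^2)"

definition ellipse_integral :: "real \<Rightarrow> real \<Rightarrow> real \<Rightarrow> real" where
  "ellipse_integral a b = primitive (\<lambda>\<phi>. 1 / ellipse_norm a b \<phi>)"

lemma ellipse_integral_0 [simp]: "ellipse_integral a b 0 = 0"
  by (simp add: ellipse_integral_def)

context
  fixes a b :: real
  assumes a: "a > 0" and b: "b > 0"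
begin

lemma ellipse_norm_radicand_pos: "a^2 * (cos \<phi>)^2 + b^2 * (sin \<phi>)^2 > 0"
proof (cases "cos \<phi> = 0")
  case True
  then have "(sin \<phi>)^2 = 1" using sin_cos_squared_add[of \<phi>] by simp
  then show ?thesis using True b by simp
next
  case False
  then show ?thesis using a by (simp add: add_pos_nonneg)
qed

lemma ellipse_norm_pos: "ellipse_norm a b \<phi> > 0"
  unfolding ellipse_norm_def using ellipse_norm_radicand_pos by simp

lemma power2_ellipse_norm: "(ellipse_norm a b \<phi>)^2 = a^2 * (cos \<phi>)^2 + b^2 * (sin \<phi>)^2"
  unfolding ellipse_norm_def using ellipse_norm_radicand_pos[of \<phi>] by simp

lemma ellipse_norm_has_real_derivative:
  "(ellipse_norm a b has_real_derivative sin \<phi> * cos \<phi> * (b^2 - a^2) / ellipse_norm a b \<phi>) (at \<phi>)"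
proof -
  have "(ellipse_norm a b has_real_derivative
     (a^2 * (2 * cos \<phi> * (- sin \<phi>)) + b^2 * (2 * sin \<phi> * cos \<phi>)) *
       (inverse (ellipse_norm a b \<phi>) / 2))
     (at \<phi>)"
    unfolding ellipse_norm_def[abs_def] using ellipse_norm_radicand_pos[of \<phi>]
    by (auto intro!: derivative_eq_intros simp: power2_eq_square)
  moreover have "(a^2 * (2 * cos \<phi> * (- sin \<phi>)) + b^2 * (2 * sin \<phi> * cos \<phi>)) *
    (inverse (ellipse_norm a b \<phi>) / 2)
      = sin \<phi> * cos \<phi> * (b^2 - a^2) / ellipse_norm a b \<phi>"
    using ellipse_norm_pos[of \<phi>] by (simp add: field_simps)
  ultimately show ?thesis by simp
qed

lemma ellipse_norm_le: "ellipse_norm a b \<phi> \<le> max a b"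
proof -
  have "a^2 * (cos \<phi>)^2 + b^2 * (sin \<phi>)^2 \<le> (max a b)^2 * (cos \<phi>)^2 + (max a b)^2 * (sin \<phi>)^2"
    using a b by (intro add_mono mult_right_mono power_mono) auto
  also have "\<dots> = (max a b)^2" by (simp add: distrib_left[symmetric])
  finally have "(ellipse_norm a b \<phi>)^2 \<le> (max a b)^2" unfolding power2_ellipse_norm .
  then show ?thesis using a by (simp add: power2_le_iff_abs_le)
qed

lemma ellipse_norm_ge: "ellipse_norm a b \<phi> \<ge> min a b"
proof -
  have "(min a b)^2 * (cos \<phi>)^2 + (min a b)^2 * (sin \<phi>)^2 \<le> a^2 * (cos \<phi>)^2 + b^2 * (sin \<phi>)^2"
    using a b by (intro add_mono mult_right_mono power_mono) auto
  moreover have "(min a b)^2 * (cos \<phi>)^2 + (min a b)^2 * (sin \<phi>)^2 = (min a b)^2"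
    by (simp add: distrib_left[symmetric])
  ultimately have "(min a b)^2 \<le> (ellipse_norm a b \<phi>)^2" unfolding power2_ellipse_norm by simp
  then show ?thesis using ellipse_norm_pos[of \<phi>] by (simp add: power2_le_iff_abs_le)
qed

lemma ellipse_integral_has_real_derivative:
  "(ellipse_integral a b has_real_derivative 1 / ellipse_norm a b \<phi>) (at \<phi>)"
  unfolding ellipse_integral_def
proof (rule primitive_has_real_derivative)
  show "continuous_on UNIV (\<lambda>\<phi>. 1 / ellipse_norm a b \<phi>)"
    using ellipse_norm_pos unfolding ellipse_norm_def
    by (intro continuous_intros) (metis less_irrefl)
qed

lemma ellipse_integral_pi_minus:
  "ellipse_integral a b (pi - \<phi>) + ellipse_integral a b \<phi> = ellipse_integral a b pi"
proof -
  have "\<forall>x. ((\<lambda>\<phi>. ellipse_integral a b (pi - \<phi>) + ellipse_integral a b \<phi>) has_real_derivative 0)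
    (at x)"
  proof
    fix x
    have "((\<lambda>\<phi>. ellipse_integral a b (pi - \<phi>) + ellipse_integral a b \<phi>) has_real_derivative
       (1 / ellipse_norm a b (pi - x)) * (-1) + 1 / ellipse_norm a b x) (at x)"
      by (rule derivative_eq_intros DERIV_chain2[OF ellipse_integral_has_real_derivative] | simp)+
    then show "((\<lambda>\<phi>. ellipse_integral a b (pi - \<phi>) + ellipse_integral a b \<phi>)
        has_real_derivative 0) (at x)"
      by (simp add: ellipse_norm_def)
  qed
  from DERIV_isconst_all[OF this, of \<phi> 0] show ?thesis by simp
qed

lemma ellipse_integral_add_pi:
  "ellipse_integral a b (\<phi> + pi) = ellipse_integral a b \<phi> + ellipse_integral a b pi"
proof -
  have "\<forall>x. ((\<lambda>\<phi>. ellipse_integral a b (\<phi> + pi) - ellipse_integral a b \<phi>) has_real_derivative 0)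
    (at x)"
  proof
    fix x
    have "((\<lambda>\<phi>. ellipse_integral a b (\<phi> + pi) - ellipse_integral a b \<phi>) has_real_derivative
       (1 / ellipse_norm a b (x + pi)) * 1 - 1 / ellipse_norm a b x) (at x)"
      by (rule derivative_eq_intros DERIV_chain2[OF ellipse_integral_has_real_derivative] | simp)+
    then show "((\<lambda>\<phi>. ellipse_integral a b (\<phi> + pi) - ellipse_integral a b \<phi>)
        has_real_derivative 0) (at x)"
      by (simp add: ellipse_norm_def)
  qed
  from DERIV_isconst_all[OF this, of \<phi> 0] show ?thesis by simp
qed

lemma ellipse_integral_2pi: "ellipse_integral a b (2 * pi) = 4 * ellipse_integral a b (pi / 2)"
  using ellipse_integral_add_pi[of pi] ellipse_integral_pi_minus[of "pi / 2"] by simp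

lemma ellipse_integral_strict_mono: "strict_mono (ellipse_integral a b)"
proof (rule strict_monoI)
  fix x y :: real
  assume "x < y"
  then show "ellipse_integral a b x < ellipse_integral a b y"
  proof (rule DERIV_pos_imp_increasing)
    fix z
    show "\<exists>y. (ellipse_integral a b has_real_derivative y) (at z) \<and> 0 < y"
      by (intro exI[of _ "1 / ellipse_norm a b z"] conjI ellipse_integral_has_real_derivative)
         (simp add: ellipse_norm_pos)
  qed
qed

lemma ellipse_integral_less_iff: "ellipse_integral a b x < ellipse_integral a b y \<longleftrightarrow> x < y"
  and ellipse_integral_le_iff: "ellipse_integral a b x \<le> ellipse_integral a b y \<longleftrightarrow> x \<le> y"
  and ellipse_integral_eq_iff: "ellipse_integral a b x = ellipse_integral a b y \<longleftrightarrow> x = y"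
  using ellipse_integral_strict_mono
  by (simp_all add: strict_mono_less strict_mono_less_eq strict_mono_eq)

lemma ellipse_integral_ge_linear: "0 \<le> x \<Longrightarrow> x / max a b \<le> ellipse_integral a b x"
  and ellipse_integral_le_linear: "0 \<le> x \<Longrightarrow> ellipse_integral a b x \<le> x / min a b"
  and ellipse_integral_le_linear_neg: "x \<le> 0 \<Longrightarrow> ellipse_integral a b x \<le> x / max a b"
proof -
  have "max a b > 0" "min a b > 0" using a b by simp_all
  have lower: "\<exists>y. ((\<lambda>x. ellipse_integral a b x - x / max a b) has_real_derivative y) (at x)
    \<and> y \<ge> 0" for x
  proof -
    have "((\<lambda>x. ellipse_integral a b x - x / max a b) has_real_derivative
        1 / ellipse_norm a b x - 1 / max a b) (at x)"
      using ellipse_integral_has_real_derivative \<open>max a b > 0\<close>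
        by (auto intro!: derivative_eq_intros)
    moreover have "1 / ellipse_norm a b x - 1 / max a b \<ge> 0"
      using ellipse_norm_le[of x] ellipse_norm_pos[of x] by (simp add: frac_le)
    ultimately show ?thesis by blast
  qed
  have upper: "\<exists>y. ((\<lambda>x. x / min a b - ellipse_integral a b x) has_real_derivative y) (at x)
    \<and> y \<ge> 0" for x
  proof -
    have "((\<lambda>x. x / min a b - ellipse_integral a b x) has_real_derivative
        1 / min a b - 1 / ellipse_norm a b x) (at x)"
      using ellipse_integral_has_real_derivative \<open>min a b > 0\<close>
        by (auto intro!: derivative_eq_intros)
    moreover have "1 / min a b - 1 / ellipse_norm a b x \<ge> 0"
      using ellipse_norm_ge[of x] a b by (simp add: frac_le)
    ultimately show ?thesis by blast
  qed
  show "0 \<le> x \<Longrightarrow> x / max a b \<le> ellipse_integral a b x"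
    using DERIV_nonneg_imp_nondecreasing[of 0 x, OF _ lower] \<open>max a b > 0\<close> by simp
  show "0 \<le> x \<Longrightarrow> ellipse_integral a b x \<le> x / min a b"
    using DERIV_nonneg_imp_nondecreasing[of 0 x, OF _ upper] \<open>min a b > 0\<close> by simp
  show "x \<le> 0 \<Longrightarrow> ellipse_integral a b x \<le> x / max a b"
    using DERIV_nonneg_imp_nondecreasing[of x 0, OF _ lower] \<open>max a b > 0\<close> by simp
qed

lemma ellipse_integral_surj: "\<exists>x. ellipse_integral a b x = t"
proof -
  define M where "M = max a b * (\<bar>t\<bar> + 1)"
  have M: "M \<ge> 0" using a M_def by simp
  have "ellipse_integral a b (-M) \<le> t"
    using ellipse_integral_le_linear_neg[of "-M"] M a unfolding M_def by (simp add: max_def)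
  moreover have "t \<le> ellipse_integral a b M"
    using ellipse_integral_ge_linear[of M] M a unfolding M_def by (simp add: max_def)
  moreover have "\<forall>x. -M \<le> x \<and> x \<le> M \<longrightarrow> isCont (ellipse_integral a b) x"
    using ellipse_integral_has_real_derivative DERIV_isCont by blast
  ultimately show ?thesis using IVT[of "ellipse_integral a b" "-M" t M] M by auto
qed

end

definition ellipse_integral_inv :: "real \<Rightarrow> real \<Rightarrow> real \<Rightarrow> real" where
  "ellipse_integral_inv a b t = (THE x. ellipse_integral a b x = t)"

context
  fixes a b :: real
  assumes a: "a > 0" and b: "b > 0"
begin

lemma ellipse_integral_inv_inverse: "ellipse_integral a b (ellipse_integral_inv a b t) = t"
proof -
  obtain x where x: "ellipse_integral a b x = t" using ellipse_integral_surj[OF a b] by blast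
  have "ellipse_integral_inv a b t = x" unfolding ellipse_integral_inv_def
    by (rule the_equality) (use x ellipse_integral_eq_iff[OF a b] in auto)
  then show ?thesis using x by simp
qed

lemma ellipse_integral_inv_eq: "ellipse_integral_inv a b (ellipse_integral a b x) = x"
  using ellipse_integral_inv_inverse[of "ellipse_integral a b x"] ellipse_integral_eq_iff[OF a b]
    by blast

lemma ellipse_integral_inv_less_iff:
  "ellipse_integral_inv a b s < ellipse_integral_inv a b t \<longleftrightarrow> s < t"
  and ellipse_integral_inv_le_iff: "ellipse_integral_inv a b s \<le> ellipse_integral_inv a b t \<longleftrightarrow> s \<le> t"
  using ellipse_integral_less_iff[OF a b] ellipse_integral_le_iff[OF a b]
    ellipse_integral_inv_inverse
  by metis+

lemma ellipse_integral_inv_has_real_derivative: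
  "(ellipse_integral_inv a b has_real_derivative ellipse_norm a b (ellipse_integral_inv a b t))
    (at t)"
proof -
  note F' = ellipse_integral_has_real_derivative[OF a b]
  have "isCont (ellipse_integral_inv a b) (ellipse_integral a b (ellipse_integral_inv a b t))"
    by (rule isCont_inverse_function[where d=1 and f="ellipse_integral a b"])
       (use ellipse_integral_inv_eq DERIV_isCont[OF F'] in auto)
  then have "isCont (ellipse_integral_inv a b) t" using ellipse_integral_inv_inverse by simp
  then have "(ellipse_integral_inv a b has_real_derivative
      inverse (1 / ellipse_norm a b (ellipse_integral_inv a b t))) (at t)"
    by (intro DERIV_inverse_function[where a="t - 1" and b="t + 1" and f="ellipse_integral a b"])
       (use F' ellipse_norm_pos[OF a b] ellipse_integral_inv_inverse
         in \<open>auto simp: less_imp_neq[symmetric]\<close>)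
  then show ?thesis by simp
qed

end

section \<open>Landen's transformation and the arithmetic-geometric mean\<close>

lemma cos_double_arctan: "cos (2 * arctan t) = (1 - t^2) / (1 + t^2)"
proof -
  have "1 + t^2 > 0" by (simp add: add_pos_nonneg)
  then show ?thesis
    by (simp add: cos_double cos_arctan sin_arctan power_divide diff_divide_distrib)
qed

lemma sin_double_arctan: "sin (2 * arctan t) = 2 * t / (1 + t^2)"
proof -
  have "1 + t^2 > 0" by (simp add: add_pos_nonneg)
  have "sin (2 * arctan t) = 2 * sin (arctan t) * cos (arctan t)" by (rule sin_double)
  also have "\<dots> = 2 * t / (1 + t^2)"
    using \<open>1 + t^2 > 0\<close> by (simp add: cos_arctan sin_arctan field_simps power2_eq_square[symmetric])
  finally show ?thesis .
qed

text \<open>Half-angle tangent formulas for the angle with cosine \<open>a c / d\<close> and sine \<open>b s / d\<close>.\<close>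
lemma landen_half_angle_tangent:
  fixes a b c s d :: real
  assumes "d > 0" "d^2 = a^2 * c^2 + b^2 * s^2" "d + a * c > 0"
  defines "t \<equiv> b * s / (d + a * c)"
  shows "1 + t^2 = 2 * d / (d + a * c)"
    and "(1 - t^2) / (1 + t^2) = a * c / d"
    and "2 * t / (1 + t^2) = b * s / d"
proof -
  define Q where "Q = d + a * c"
  have Q: "Q > 0" using assms Q_def by simp
  have bs: "(b * s)^2 = 2 * d * Q - Q^2" using assms(2) unfolding Q_def by algebra
  have r: "(2 * d * Q - Q^2) / Q^2 = 2 * d / Q - 1" using Q
    by (simp add: field_simps power2_eq_square)
  have plus: "1 + t^2 = 2 * d / Q"
    unfolding t_def Q_def[symmetric] power_divide bs r by simp
  have minus: "1 - t^2 = 2 * (a * c) / Q"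
    unfolding t_def Q_def[symmetric] power_divide bs r using Q by (simp add: field_simps Q_def)
  show "1 + t^2 = 2 * d / (d + a * c)" using plus Q_def by simp
  show "(1 - t^2) / (1 + t^2) = a * c / d" unfolding plus minus using Q assms(1)
    by (simp add: field_simps)
  show "2 * t / (1 + t^2) = b * s / d" unfolding plus unfolding t_def Q_def[symmetric]
    using Q assms(1) by (simp add: field_simps)
qed

lemma landen_norm_identity:
  fixes a b c s D :: real
  assumes "D > 0" "D^2 = a^2 * c^2 + b^2 * s^2" "c^2 + s^2 = 1"
  shows "((a + b) / 2)^2 * ((a * c^2 - b * s^2) / D)^2 + (a * b) * ((a + b) * s * c / D)^2
    = ((D^2 + a * b) / (2 * D))^2"
proof -
  have "(a + b)^2 * (a * c^2 - b * s^2)^2 + 4 * (a * b) * ((a + b) * s * c)^2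
      = ((a + b) * (a * c^2 + b * s^2))^2"
    by (simp add: power2_eq_square algebra_simps)
  moreover have "(a + b) * (a * c^2 + b * s^2) = D^2 + a * b" using assms(2,3) by algebra
  ultimately have "((a + b) / 2)^2 * (a * c^2 - b * s^2)^2 + (a * b) * ((a + b) * s * c)^2
      = ((D^2 + a * b) / 2)^2"
    by (simp add: power_divide field_simps)
  then show ?thesis using assms(1) by (simp add: power_divide field_simps)
qed

lemma landen_tangent_derivative:
  fixes a b c s d :: real
  assumes "d > 0" "d^2 = a^2 * c^2 + b^2 * s^2" "s^2 + c^2 = 1"
  shows "b * c * (d + a * c) - b * s * (s * c * (b^2 - a^2) / d - a * s) = a * b * (d + a * c) / d"
proof -
  have "b * c * (d + a * c) * d - b * s * (s * c * (b^2 - a^2)) + a * b * s^2 * d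
      = a * b * (d + a * c)"
    using assms(2,3) by algebra
  then show ?thesis using assms(1) by (simp add: field_simps power2_eq_square)
qed

text \<open>The angle with cosine \<open>(a cos\<^sup>2 \<phi> - b sin\<^sup>2 \<phi>) / D\<close> and sine \<open>(a + b) sin \<phi> cos \<phi> / D\<close>,
  where \<open>D = ellipse_norm a b \<phi>\<close> (see below), written so as to be visibly smooth where
  \<open>cos \<phi> \<ge> 0\<close>.\<close>
definition landen_angle :: "real \<Rightarrow> real \<Rightarrow> real \<Rightarrow> real" where
  "landen_angle a b \<phi> = \<phi> + 2 * arctan (b * sin \<phi> / (ellipse_norm a b \<phi> + a * cos \<phi>))"

context
  fixes a b \<phi> :: real
  assumes a: "a > 0" and b: "b > 0" and cos_nonneg: "0 \<le> cos \<phi>"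
begin

lemma landen_denominator_pos: "ellipse_norm a b \<phi> + a * cos \<phi> > 0"
  using ellipse_norm_pos[OF a b] cos_nonneg a by (simp add: add_pos_nonneg)

lemmas landen_tangent = landen_half_angle_tangent[OF ellipse_norm_pos[OF a b]
  power2_ellipse_norm[OF a b] landen_denominator_pos]

lemma landen_angle_has_real_derivative:
  "(landen_angle a b has_real_derivative 1 + a * b / (ellipse_norm a b \<phi>)^2) (at \<phi>)"
proof -
  define D where "D = ellipse_norm a b \<phi>"
  define Q where "Q = D + a * cos \<phi>"
  have D: "D > 0" and Q: "Q > 0"
    using ellipse_norm_pos[OF a b] landen_denominator_pos unfolding D_def Q_def by auto
  have "((\<lambda>\<phi>. b * sin \<phi> / (ellipse_norm a b \<phi> + a * cos \<phi>)) has_real_derivative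
      (b * cos \<phi> * Q - b * sin \<phi> * (sin \<phi> * cos \<phi> * (b^2 - a^2) / D - a * sin \<phi>)) / (Q * Q)) (at \<phi>)"
    unfolding D_def Q_def
    by (rule DERIV_divide)
       (use landen_denominator_pos ellipse_norm_has_real_derivative[OF a b]
         in \<open>auto intro!: derivative_eq_intros\<close>)
  also have "b * cos \<phi> * Q - b * sin \<phi> * (sin \<phi> * cos \<phi> * (b^2 - a^2) / D - a * sin \<phi>)
      = a * b * Q / D"
    unfolding Q_def using D power2_ellipse_norm[OF a b, of \<phi>] sin_cos_squared_add[of \<phi>]
    unfolding D_def[symmetric] by (rule landen_tangent_derivative)
  finally have tangent': "((\<lambda>\<phi>. b * sin \<phi> / (ellipse_norm a b \<phi> + a * cos \<phi>)) has_real_derivative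
      (a * b / D) / Q) (at \<phi>)"
    using Q by (simp add: power2_eq_square)
  have "(landen_angle a b has_real_derivative
      1 + 2 * (inverse (1 + (b * sin \<phi> / Q)^2) * ((a * b / D) / Q))) (at \<phi>)"
    using DERIV_add[OF DERIV_ident
        DERIV_cmult[where c=2, OF DERIV_chain2[OF DERIV_arctan tangent']]]
    unfolding landen_angle_def[abs_def] Q_def D_def by simp
  moreover have "2 * (inverse (1 + (b * sin \<phi> / Q)^2) * ((a * b / D) / Q)) = a * b / D^2"
  proof -
    have "1 + (b * sin \<phi> / Q)^2 = 2 * D / Q"
      using landen_tangent(1) unfolding Q_def D_def .
    then show ?thesis using D Q by (simp only:) (simp add: field_simps power2_eq_square)
  qed
  ultimately show ?thesis unfolding D_def by simp
qed

lemma cos_landen_angle: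
  "cos (landen_angle a b \<phi>) = (a * (cos \<phi>)^2 - b * (sin \<phi>)^2) / ellipse_norm a b \<phi>"
  using landen_tangent(2,3) ellipse_norm_pos[OF a b, of \<phi>]
  by (simp add: landen_angle_def cos_add cos_double_arctan sin_double_arctan
      diff_divide_distrib power2_eq_square mult_ac)

lemma sin_landen_angle:
  "sin (landen_angle a b \<phi>) = (a + b) * sin \<phi> * cos \<phi> / ellipse_norm a b \<phi>"
  using landen_tangent(2,3) ellipse_norm_pos[OF a b, of \<phi>]
  by (simp add: landen_angle_def sin_add cos_double_arctan sin_double_arctan
      add_divide_distrib[symmetric] algebra_simps)

lemma ellipse_norm_landen_angle:
  "ellipse_norm ((a + b) / 2) (sqrt (a * b)) (landen_angle a b \<phi>)
    = ((ellipse_norm a b \<phi>)^2 + a * b) / (2 * ellipse_norm a b \<phi>)"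
proof -
  define D where "D = ellipse_norm a b \<phi>"
  have D: "D > 0" unfolding D_def by (rule ellipse_norm_pos[OF a b])
  have pos: "(a + b) / 2 > 0" "sqrt (a * b) > 0" using a b by auto
  have "(ellipse_norm ((a + b) / 2) (sqrt (a * b)) (landen_angle a b \<phi>))^2
      = ((a + b) / 2)^2 * ((a * (cos \<phi>)^2 - b * (sin \<phi>)^2) / D)^2
        + (sqrt (a * b))^2 * ((a + b) * sin \<phi> * cos \<phi> / D)^2"
    by (simp only: power2_ellipse_norm[OF pos] cos_landen_angle sin_landen_angle D_def)
  also have "(sqrt (a * b))^2 = a * b" using a b by simp
  also have "((a + b) / 2)^2 * ((a * (cos \<phi>)^2 - b * (sin \<phi>)^2) / D)^2
      + (a * b) * ((a + b) * sin \<phi> * cos \<phi> / D)^2 = ((D^2 + a * b) / (2 * D))^2"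
    using D power2_ellipse_norm[OF a b, of \<phi>] unfolding D_def[symmetric]
    by (rule landen_norm_identity) simp
  finally have "(ellipse_norm ((a + b) / 2) (sqrt (a * b)) (landen_angle a b \<phi>))^2
      = ((D^2 + a * b) / (2 * D))^2" .
  moreover have "0 \<le> ellipse_norm ((a + b) / 2) (sqrt (a * b)) (landen_angle a b \<phi>)"
    using ellipse_norm_pos[OF pos] less_imp_le by blast
  ultimately show ?thesis unfolding D_def[symmetric] using D a b
    by (simp add: power2_eq_iff_nonneg)
qed

lemma ellipse_integral_landen_angle_has_real_derivative:
  "((\<lambda>\<phi>. ellipse_integral ((a + b) / 2) (sqrt (a * b)) (landen_angle a b \<phi>)) has_real_derivative
    2 / ellipse_norm a b \<phi>) (at \<phi>)"
proof -
  define D where "D = ellipse_norm a b \<phi>"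
  have D: "D > 0" unfolding D_def by (rule ellipse_norm_pos[OF a b])
  have pos: "(a + b) / 2 > 0" "sqrt (a * b) > 0" using a b by auto
  have "((\<lambda>\<phi>. ellipse_integral ((a + b) / 2) (sqrt (a * b)) (landen_angle a b \<phi>))
      has_real_derivative
        (1 / ellipse_norm ((a + b) / 2) (sqrt (a * b)) (landen_angle a b \<phi>)) * (1 + a * b / D^2))
      (at \<phi>)"
    unfolding D_def
    by (rule DERIV_chain2[OF ellipse_integral_has_real_derivative[OF pos]
          landen_angle_has_real_derivative])
  moreover have "(1 / ellipse_norm ((a + b) / 2) (sqrt (a * b)) (landen_angle a b \<phi>))
      * (1 + a * b / D^2) = 2 / D"
  proof -
    have "D^2 + a * b > 0" using D a b by (simp add: add_pos_pos)
    have "1 + a * b / D^2 = (D^2 + a * b) / D^2" using D by (simp add: field_simps)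
    then have "(1 / ellipse_norm ((a + b) / 2) (sqrt (a * b)) (landen_angle a b \<phi>))
        * (1 + a * b / D^2) = (2 * D / (D^2 + a * b)) * ((D^2 + a * b) / D^2)"
      unfolding ellipse_norm_landen_angle D_def[symmetric] by simp
    also have "\<dots> = 2 * D / D^2" using \<open>D^2 + a * b > 0\<close> by simp
    finally show ?thesis using D by (simp add: power2_eq_square)
  qed
  ultimately show ?thesis unfolding D_def by simp
qed

end

text \<open>Landen's substitution maps \<open>[0, pi/2]\<close> onto \<open>[0, pi]\<close> and doubles the integrand.\<close>
lemma ellipse_integral_landen:
  assumes a: "a > 0" and b: "b > 0"
  shows "ellipse_integral ((a + b) / 2) (sqrt (a * b)) (pi / 2) = ellipse_integral a b (pi / 2)"
proof -
  define a1 where "a1 = (a + b) / 2"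
  define b1 where "b1 = sqrt (a * b)"
  have a1: "a1 > 0" and b1: "b1 > 0" using a b by (auto simp: a1_def b1_def)
  define G where
    "G x = ellipse_integral a1 b1 (landen_angle a b x) - 2 * ellipse_integral a b x" for x
  have G': "(G has_real_derivative 0) (at x)" if "0 \<le> cos x" for x
    using DERIV_diff[OF ellipse_integral_landen_angle_has_real_derivative[OF a b that]
        DERIV_cmult[where c=2, OF ellipse_integral_has_real_derivative[OF a b]]]
    unfolding G_def[abs_def] a1_def b1_def by simp
  have cos_nonneg: "0 \<le> cos x" if "0 \<le> x" "x \<le> pi / 2" for x
    using that by (intro cos_ge_zero) auto
  have "G (pi / 2) = G 0"
  proof (rule DERIV_isconst_end[of 0 "pi / 2" G])
    show "continuous_on {0..pi / 2} G"
      by (rule DERIV_continuous_on[where D="\<lambda>_. 0"])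
         (use G' cos_nonneg in \<open>auto intro: has_field_derivative_at_within\<close>)
    show "\<And>x. 0 < x \<Longrightarrow> x < pi / 2 \<Longrightarrow> (G has_real_derivative 0) (at x)"
      using G' cos_nonneg by auto
  qed simp
  moreover have "landen_angle a b 0 = 0" by (simp add: landen_angle_def)
  moreover have "landen_angle a b (pi / 2) = pi"
    using b by (simp add: landen_angle_def ellipse_norm_def arctan_one)
  ultimately have "ellipse_integral a1 b1 pi = 2 * ellipse_integral a b (pi / 2)"
    unfolding G_def by simp
  then show ?thesis
    using ellipse_integral_pi_minus[OF a1 b1, of "pi / 2"] unfolding a1_def b1_def by simp
qed

lemma agm_seq_Suc_fst: "fst (agm_seq a b (Suc n)) = (fst (agm_seq a b n) + snd (agm_seq a b n)) / 2"
  and agm_seq_Suc_snd: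
    "snd (agm_seq a b (Suc n)) = sqrt (fst (agm_seq a b n) * snd (agm_seq a b n))"
  by (simp_all split: prod.split)

context
  fixes a b :: real
  assumes a: "a > 0" and b: "b > 0"
begin

lemma agm_seq_pos: "fst (agm_seq a b n) > 0 \<and> snd (agm_seq a b n) > 0"
proof (induction n)
  case (Suc n)
  then show ?case unfolding agm_seq_Suc_fst agm_seq_Suc_snd by simp
qed (use a b in simp)

lemma agm_seq_snd_le_fst: "snd (agm_seq a b (Suc n)) \<le> fst (agm_seq a b (Suc n))"
  unfolding agm_seq_Suc_fst agm_seq_Suc_snd
  using agm_seq_pos[of n] by (intro arith_geo_mean_sqrt) auto

lemma agm_seq_tendsto: "(\<lambda>n. fst (agm_seq a b n)) \<longlonglongrightarrow> agm a b"
proof -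
  define X where "X n = fst (agm_seq a b (Suc n))" for n
  have "X (Suc n) \<le> X n" for n
    using agm_seq_snd_le_fst[of n] unfolding X_def agm_seq_Suc_fst[of a b "Suc n"] by simp
  then have "decseq X" by (rule decseq_SucI)
  moreover have "\<forall>i. 0 \<le> X i" unfolding X_def using agm_seq_pos less_imp_le by blast
  ultimately obtain L where "X \<longlonglongrightarrow> L" by (rule decseq_convergent)
  then have "(\<lambda>n. fst (agm_seq a b n)) \<longlonglongrightarrow> L"
    unfolding X_def using filterlim_sequentially_Suc[of "\<lambda>n. fst (agm_seq a b n)"] by simp
  moreover from this have "agm a b = L" unfolding agm_def by (rule limI)
  ultimately show ?thesis by simp
qed

text \<open>The first Landen step is symmetric in \<open>a\<close> and \<open>b\<close>, hence the swapped arguments.\<close>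
lemma ellipse_integral_agm_seq:
  "ellipse_integral (2 * fst (agm_seq a b (Suc n))) (2 * snd (agm_seq a b (Suc n))) (pi / 2)
    = ellipse_integral (2 * b) (2 * a) (pi / 2)"
proof (induction n)
  case 0
  have "ellipse_integral ((2 * b + 2 * a) / 2) (sqrt (2 * b * (2 * a))) (pi / 2)
      = ellipse_integral (2 * b) (2 * a) (pi / 2)"
    using a b by (intro ellipse_integral_landen) auto
  moreover have "sqrt (2 * b * (2 * a)) = 2 * sqrt (a * b)" by (simp add: real_sqrt_mult mult_ac)
  ultimately show ?case by (simp add: algebra_simps)
next
  case (Suc n)
  define x where "x = fst (agm_seq a b (Suc n))"
  define y where "y = snd (agm_seq a b (Suc n))"
  have "x > 0" "y > 0" using agm_seq_pos[of "Suc n"] x_def y_def by auto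
  then have "ellipse_integral ((2 * x + 2 * y) / 2) (sqrt (2 * x * (2 * y))) (pi / 2)
      = ellipse_integral (2 * x) (2 * y) (pi / 2)"
    by (intro ellipse_integral_landen) auto
  moreover have "sqrt (2 * x * (2 * y)) = 2 * sqrt (x * y)" by (simp add: real_sqrt_mult mult_ac)
  ultimately show ?case using Suc.IH
    unfolding agm_seq_Suc_fst[of a b "Suc n"] agm_seq_Suc_snd[of a b "Suc n"]
      x_def[symmetric] y_def[symmetric]
    by (simp add: algebra_simps)
qed

text \<open>Gauss: equality holds, but only this direction is needed.\<close>
lemma pi_div_agm_le_ellipse_integral:
  "pi / agm a b \<le> 4 * ellipse_integral (2 * b) (2 * a) (pi / 2)"
proof -
  define P where "P = 4 * ellipse_integral (2 * b) (2 * a) (pi / 2)"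
  have bound: "pi / fst (agm_seq a b (Suc n)) \<le> P" for n
  proof -
    define x where "x = fst (agm_seq a b (Suc n))"
    define y where "y = snd (agm_seq a b (Suc n))"
    have xy: "x > 0" "y > 0" "y \<le> x"
      using agm_seq_pos[of "Suc n"] agm_seq_snd_le_fst[of n] x_def y_def by auto
    then have "(pi / 2) / (2 * x) \<le> ellipse_integral (2 * x) (2 * y) (pi / 2)"
      using ellipse_integral_ge_linear[of "2 * x" "2 * y" "pi / 2"] by simp
    then show ?thesis unfolding P_def x_def y_def ellipse_integral_agm_seq
      by (simp add: field_simps)
  qed
  have P: "P > 0"
    using bound[of 0] agm_seq_pos[of 1] by (smt (verit) divide_pos_pos pi_gt_zero One_nat_def)
  have "pi / P \<le> fst (agm_seq a b (Suc n))" for n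
    using bound[of n] P agm_seq_pos[of "Suc n"] by (simp add: field_simps)
  then have "\<forall>n\<ge>1. pi / P \<le> fst (agm_seq a b n)" by (metis Suc_diff_1 less_le_trans zero_less_one)
  then have "pi / P \<le> agm a b" by (intro LIMSEQ_le_const[OF agm_seq_tendsto]) blast
  then have "agm a b > 0" "pi \<le> agm a b * P"
    using P
    by (auto simp: pos_divide_le_eq intro: less_le_trans[OF divide_pos_pos[OF pi_gt_zero P]])
  then show ?thesis unfolding P_def[symmetric] by (simp add: pos_divide_le_eq mult.commute)
qed

end

section \<open>The loop level sets as orbits of \<open>\<Sigma>\<close>\<close>

definition loop_major :: "real \<Rightarrow> real" where "loop_major k = sqrt (1 + 2 * k)"
definition loop_minor :: "real \<Rightarrow> real" where "loop_minor k = 2 * sqrt k"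
definition loop_radius :: "real \<Rightarrow> real" where "loop_radius k = sqrt (1 - 2 * k)"

definition loop_speed :: "real \<Rightarrow> real \<Rightarrow> real" where
  "loop_speed k = ellipse_norm (loop_major k) (loop_minor k)"

definition loop_time :: "real \<Rightarrow> real \<Rightarrow> real" where
  "loop_time k = ellipse_integral (loop_major k) (loop_minor k)"

definition loop_angle :: "real \<Rightarrow> real \<Rightarrow> real" where
  "loop_angle k = ellipse_integral_inv (loop_major k) (loop_minor k)"

text \<open>On the loop \<open>xy = k\<close> of the unit sphere, \<open>(y - x, z)\<close> runs over the circle of radius
  \<open>sqrt (1 - 2k)\<close> and \<open>x + y = sqrt (4k + (y - x)^2)\<close>; \<open>\<theta>\<close> is the angle on that circle.\<close>
definition loop_point :: "real \<Rightarrow> real \<Rightarrow> vec3" where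
  "loop_point k \<theta> = ((loop_speed k \<theta> - loop_radius k * cos \<theta>) / 2,
     (loop_speed k \<theta> + loop_radius k * cos \<theta>) / 2, loop_radius k * sin \<theta>)"

definition loop_flow :: "real \<Rightarrow> real \<Rightarrow> real \<Rightarrow> vec3" where
  "loop_flow k \<theta>\<^sub>0 t = loop_point k (loop_angle k (t + loop_time k \<theta>\<^sub>0))"

locale loop_level =
  fixes k :: real
  assumes k_pos: "0 < k" and k_less: "k < 1 / 2"
begin

lemma loop_major_pos: "loop_major k > 0"
  and loop_minor_pos: "loop_minor k > 0"
  and loop_radius_pos: "loop_radius k > 0"
  using k_pos k_less by (simp_all add: loop_major_def loop_minor_def loop_radius_def)

lemma power2_loop_major: "(loop_major k)^2 = 1 + 2 * k"
  and power2_loop_radius: "(loop_radius k)^2 = 1 - 2 * k"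
  using k_pos k_less by (simp_all add: loop_major_def loop_radius_def)

lemma loop_minor_le_major: "loop_minor k \<le> loop_major k"
  using k_pos k_less
  by (simp add: loop_minor_def loop_major_def real_le_rsqrt real_sqrt_mult[symmetric]
      power_mult_distrib)

lemmas loop_axes_pos = loop_major_pos loop_minor_pos

lemma loop_speed_pos: "loop_speed k \<theta> > 0"
  unfolding loop_speed_def by (rule ellipse_norm_pos[OF loop_axes_pos])

lemma power2_loop_speed: "(loop_speed k \<theta>)^2 = 4 * k + (loop_radius k)^2 * (cos \<theta>)^2"
proof -
  have "(loop_speed k \<theta>)^2 = (1 + 2 * k) * (cos \<theta>)^2 + 4 * k * (sin \<theta>)^2"
    unfolding loop_speed_def power2_ellipse_norm[OF loop_axes_pos] power2_loop_major
    using k_pos by (simp add: loop_minor_def power_mult_distrib)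
  also have "\<dots> = 4 * k + (loop_radius k)^2 * (cos \<theta>)^2"
    unfolding power2_loop_radius using sin_cos_squared_add[of \<theta>] by algebra
  finally show ?thesis .
qed

lemma abs_loop_radius_cos_less: "\<bar>loop_radius k * cos \<theta>\<bar> < loop_speed k \<theta>"
proof -
  have "\<bar>loop_radius k * cos \<theta>\<bar>^2 < (loop_speed k \<theta>)^2"
    unfolding power2_loop_speed using k_pos by (simp add: power_mult_distrib)
  then show ?thesis using loop_speed_pos[of \<theta>] by (simp add: power2_less_imp_less)
qed

lemma loop_speed_has_real_derivative:
  "(loop_speed k has_real_derivative - ((loop_radius k)^2 * sin \<theta> * cos \<theta>) / loop_speed k \<theta>) (at \<theta>)"
proof -
  have "(loop_minor k)^2 - (loop_major k)^2 = - ((loop_radius k)^2)"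
    unfolding power2_loop_radius power2_loop_major using k_pos
    by (simp add: loop_minor_def power_mult_distrib)
  then show ?thesis
    using ellipse_norm_has_real_derivative[OF loop_axes_pos, of \<theta>]
    unfolding loop_speed_def by (simp add: mult_ac)
qed

lemma loop_angle_time: "loop_angle k (loop_time k \<theta>) = \<theta>"
  unfolding loop_time_def loop_angle_def by (rule ellipse_integral_inv_eq[OF loop_axes_pos])

lemma loop_angle_less_iff: "loop_angle k s < loop_angle k t \<longleftrightarrow> s < t"
  and loop_angle_le_iff: "loop_angle k s \<le> loop_angle k t \<longleftrightarrow> s \<le> t"
  unfolding loop_angle_def
  by (rule ellipse_integral_inv_less_iff[OF loop_axes_pos]
      ellipse_integral_inv_le_iff[OF loop_axes_pos])+

lemma loop_angle_has_real_derivative: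
  "(loop_angle k has_real_derivative loop_speed k (loop_angle k t)) (at t)"
  unfolding loop_angle_def loop_speed_def
  by (rule ellipse_integral_inv_has_real_derivative[OF loop_axes_pos])

lemma loop_angle_affine_has_real_derivative:
  "((\<lambda>t. loop_angle k (s * t + c)) has_real_derivative
    loop_speed k (loop_angle k (s * t + c)) * s) (at t)"
proof -
  have "((\<lambda>t. s * t + c) has_real_derivative s) (at t)"
    by (auto intro!: derivative_eq_intros)
  from DERIV_chain2[OF loop_angle_has_real_derivative this] show ?thesis by simp
qed

lemma loop_point_pos: "fst (loop_point k \<theta>) > 0" "fst (snd (loop_point k \<theta>)) > 0"
  using abs_loop_radius_cos_less[of \<theta>] unfolding loop_point_def by auto

lemma loop_point_mult: "fst (loop_point k \<theta>) * fst (snd (loop_point k \<theta>)) = k"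
proof -
  have "fst (loop_point k \<theta>) * fst (snd (loop_point k \<theta>)) =
    ((loop_speed k \<theta>)^2 - (loop_radius k * cos \<theta>)^2) / 4"
    unfolding loop_point_def by (simp add: power2_eq_square field_simps)
  then show ?thesis unfolding power2_loop_speed by (simp add: power_mult_distrib)
qed

lemma loop_point_y_minus_x:
  "fst (snd (loop_point k \<theta>)) - fst (loop_point k \<theta>) = loop_radius k * cos \<theta>"
  by (simp add: loop_point_def field_simps)

lemma loop_point_has_vector_derivative:
  "(loop_point k has_vector_derivative (1 / loop_speed k \<theta>) *\<^sub>R Sigma_field (loop_point k \<theta>)) (at \<theta>)"
proof -
  define D where "D = loop_speed k \<theta>"
  define m where "m = loop_radius k"
  have D: "D > 0" unfolding D_def by (rule loop_speed_pos)
  note D' = loop_speed_has_real_derivative[of \<theta>, folded D_def m_def]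
  have "((\<lambda>\<theta>. (loop_speed k \<theta> - m * cos \<theta>) / 2) has_real_derivative
      (1 / D) * ((D - m * cos \<theta>) / 2 * (m * sin \<theta>))) (at \<theta>)"
    using D' D by (auto intro!: derivative_eq_intros simp: field_simps power2_eq_square)
  moreover have "((\<lambda>\<theta>. (loop_speed k \<theta> + m * cos \<theta>) / 2) has_real_derivative
      (1 / D) * (- ((D + m * cos \<theta>) / 2 * (m * sin \<theta>)))) (at \<theta>)"
    using D' D by (auto intro!: derivative_eq_intros simp: field_simps power2_eq_square)
  moreover have "((\<lambda>\<theta>. m * sin \<theta>) has_real_derivative
      (1 / D) * (- (((D - m * cos \<theta>) / 2)^2) + ((D + m * cos \<theta>) / 2)^2)) (at \<theta>)"
    using D by (auto intro!: derivative_eq_intros simp: field_simps power2_eq_square)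
  ultimately show ?thesis
    using has_vector_derivative_tripleI unfolding loop_point_def D_def[symmetric] m_def[symmetric]
    by (fastforce simp: Sigma_field_def)
qed

lemma Sigma_integral_curve_loop_flow: "Sigma_integral_curve (loop_flow k \<theta>\<^sub>0)"
  unfolding Sigma_integral_curve_def
proof
  fix t
  define \<Theta> where "\<Theta> t = loop_angle k (t + loop_time k \<theta>\<^sub>0)" for t
  have "(\<Theta> has_real_derivative loop_speed k (\<Theta> t)) (at t)"
    using loop_angle_affine_has_real_derivative[of 1 "loop_time k \<theta>\<^sub>0" t]
    unfolding \<Theta>_def[abs_def] by simp
  from vector_diff_chain_at[OF this[unfolded has_real_derivative_iff_has_vector_derivative]
      loop_point_has_vector_derivative]
  show "(loop_flow k \<theta>\<^sub>0 has_vector_derivative Sigma_field (loop_flow k \<theta>\<^sub>0 t)) (at t)"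
    using loop_speed_pos[of "\<Theta> t"] unfolding loop_flow_def[abs_def] \<Theta>_def o_def by simp
qed

lemma loop_flow_0: "loop_flow k \<theta>\<^sub>0 0 = loop_point k \<theta>\<^sub>0"
  by (simp add: loop_flow_def loop_angle_time)

lemma Sigma_flow_loop_point: "Sigma_flow s (loop_point k \<theta>\<^sub>0) = loop_flow k \<theta>\<^sub>0 s"
  using Sigma_flow_eqI[OF Sigma_integral_curve_loop_flow] loop_flow_0 by metis

lemma loop_point_surj:
  assumes "(x, y, z) \<in> loop_level_set k" and "z > 0"
  obtains \<theta> where "0 < \<theta>" "\<theta> < pi" "loop_point k \<theta> = (x, y, z)"
proof -
  define m where "m = loop_radius k"
  have m: "m > 0" using loop_radius_pos m_def by simp
  have xy: "x > 0" "y > 0" "x * y = k" "x^2 + y^2 + z^2 = 1"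
    using assms(1) unfolding loop_level_set_def by auto
  have "(y - x)^2 + z^2 = m^2"
    unfolding m_def power2_loop_radius using xy by (simp add: power2_diff algebra_simps)
  then have "((y - x) / m)^2 + (z / m)^2 = 1" using m by (simp add: power_divide field_simps)
  then obtain \<theta> where \<theta>: "0 \<le> \<theta>" "\<theta> < 2 * pi" "(y - x) / m = cos \<theta>" "z / m = sin \<theta>"
    by (rule sincos_total_2pi)
  have "sin \<theta> > 0" using \<theta>(4) m assms(2) by (metis divide_pos_pos)
  then have "0 < \<theta>" using \<theta>(1) by (cases "\<theta> = 0") auto
  moreover have "\<theta> < pi" using \<open>sin \<theta> > 0\<close> sin_le_zero[of \<theta>] \<theta>(2) by (cases "pi \<le> \<theta>") auto
  moreover have cs: "m * cos \<theta> = y - x" "m * sin \<theta> = z" using \<theta>(3,4) m by (auto simp: field_simps)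
  moreover have "loop_speed k \<theta> = x + y"
  proof -
    have "(loop_speed k \<theta>)^2 = (x + y)^2"
      unfolding power2_loop_speed m_def[symmetric] using cs(1) xy(3)
      by (simp add: power_mult_distrib[symmetric]) algebra
    then show ?thesis using loop_speed_pos[of \<theta>] xy by (simp add: power2_eq_iff_nonneg)
  qed
  ultimately show ?thesis using that by (simp add: loop_point_def m_def)
qed

lemma loop_point_reflect:
  assumes "loop_point k \<theta> = (x, y, z)" and "loop_point k \<psi> = (x, y, -z)"
  shows "\<exists>n::int. \<psi> = -\<theta> + 2 * pi * n"
proof -
  have m: "loop_radius k > 0" by (rule loop_radius_pos)
  have "loop_radius k * sin \<psi> = loop_radius k * (- sin \<theta>)"
    using assms unfolding loop_point_def by auto
  moreover have "loop_radius k * cos \<psi> = loop_radius k * cos \<theta>"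
    using loop_point_y_minus_x[of \<psi>] loop_point_y_minus_x[of \<theta>] assms by simp
  ultimately have "sin \<psi> = sin (-\<theta>) \<and> cos \<psi> = cos (-\<theta>)"
    using m mult_left_cancel[of "loop_radius k" "sin \<psi>" "- sin \<theta>"] by simp
  then show ?thesis using sin_cos_eq_iff by blast
qed

lemma loop_time_add_2pi: "loop_time k (\<theta> + 2 * pi) = loop_time k \<theta> + loop_time k (2 * pi)"
proof -
  have add_pi: "loop_time k (x + pi) = loop_time k x + loop_time k pi" for x
    unfolding loop_time_def by (rule ellipse_integral_add_pi[OF loop_axes_pos])
  have "loop_time k (\<theta> + 2 * pi) = loop_time k ((\<theta> + pi) + pi)" by (simp add: algebra_simps)
  moreover have "loop_time k (2 * pi) = loop_time k ((0 + pi) + pi)" by simp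
  ultimately show ?thesis unfolding add_pi by (simp add: loop_time_def)
qed

lemma loop_period_le_loop_time: "loop_period k \<le> loop_time k (2 * pi)"
proof -
  have "pi / agm (sqrt k) (sqrt (1 + 2 * (sqrt k)^2) / 2)
      \<le> 4 * ellipse_integral (2 * (sqrt (1 + 2 * (sqrt k)^2) / 2)) (2 * sqrt k) (pi / 2)"
    using k_pos by (intro pi_div_agm_le_ellipse_integral) auto
  then show ?thesis
    using k_pos ellipse_integral_2pi[OF loop_axes_pos]
    by (simp add: loop_period_def loop_time_def loop_major_def loop_minor_def)
qed

lemma loop_time_2pi_le: "loop_time k (2 * pi) \<le> pi / sqrt k"
  using ellipse_integral_le_linear[OF loop_axes_pos, of "2 * pi"]
  unfolding loop_time_def min.absorb2[OF loop_minor_le_major] by (simp add: loop_minor_def)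

end

section \<open>Geodesics of Sol and integral curves of \<open>\<Sigma>\<close>\<close>

definition sol_geodesic :: "(real \<Rightarrow> vec3) \<Rightarrow> (real \<Rightarrow> vec3) \<Rightarrow> bool" where
  "sol_geodesic \<gamma> \<gamma>' \<longleftrightarrow> (\<forall>t. (\<gamma> has_vector_derivative \<gamma>' t) (at t) \<and>
     (\<gamma>' has_vector_derivative sol_geo_acc (\<gamma> t) (\<gamma>' t)) (at t))"

text \<open>The differential of left translation by any point of height \<open>z\<close>; it carries the standard
  basis at the origin to an orthonormal basis at that point.\<close>
definition sol_translate :: "real \<Rightarrow> vec3 \<Rightarrow> vec3" where
  "sol_translate z w = (exp z * fst w, exp (- z) * fst (snd w), snd (snd w))"

lemma sol_translate_inverse [simp]:
  "sol_translate (- z) (sol_translate z w) = w" "sol_translate z (sol_translate (- z) w) = w"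
  by (simp_all add: sol_translate_def exp_minus field_simps)

lemma sol_translate_0 [simp]: "sol_translate 0 w = w"
  by (simp add: sol_translate_def)

lemma sol_geo_acc_eq:
  "sol_geo_acc p v = (2 * fst v * snd (snd v), - (2 * fst (snd v) * snd (snd v)),
    - (exp (- (2 * snd (snd p))) * (fst v)^2) + exp (2 * snd (snd p)) * (fst (snd v))^2)"
  by (cases p, cases v) (simp add: sol_geo_acc_def)

lemma power2_exp_mult: "(exp z * u)^2 = exp (2 * z) * u^2" for z u :: real
proof -
  have "exp z * exp z = exp (2 * z)" by (simp add: mult_exp_exp)
  then show ?thesis by (simp add: power_mult_distrib power2_eq_square)
qed

text \<open>\<open>\<Sigma>\<close> is the geodesic equation of Sol written in the left-invariant frame: the frame
  coordinates of the velocity of a geodesic form an integral curve of \<open>\<Sigma>\<close>, and conversely.\<close>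
lemma Sigma_integral_curve_sol_geodesic:
  assumes "sol_geodesic \<gamma> \<gamma>'"
  shows "Sigma_integral_curve (\<lambda>t. sol_translate (- snd (snd (\<gamma> t))) (\<gamma>' t))"
  unfolding Sigma_integral_curve_def
proof
  fix t
  define z where "z t = snd (snd (\<gamma> t))" for t
  define u where "u t = fst (\<gamma>' t)" for t
  define w where "w t = fst (snd (\<gamma>' t))" for t
  define r where "r t = snd (snd (\<gamma>' t))" for t
  have \<gamma>: "(\<gamma> has_vector_derivative \<gamma>' t) (at t)"
    and \<gamma>': "(\<gamma>' has_vector_derivative sol_geo_acc (\<gamma> t) (\<gamma>' t)) (at t)"
    using assms unfolding sol_geodesic_def by auto
  note z' = has_vector_derivative_triple_D(3)[OF \<gamma>, folded z_def r_def]
  note d = has_vector_derivative_triple_D[OF \<gamma>', unfolded sol_geo_acc_eq fst_conv snd_conv,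
      folded u_def w_def r_def z_def]
  have x': "((\<lambda>t. exp (- z t) * u t) has_real_derivative exp (- z t) * u t * r t) (at t)"
    using z' d(1) by (auto intro!: derivative_eq_intros simp: algebra_simps)
  have y': "((\<lambda>t. exp (z t) * w t) has_real_derivative - (exp (z t) * w t * r t)) (at t)"
    using z' d(2) by (auto intro!: derivative_eq_intros simp: algebra_simps)
  have "- (exp (- (2 * z t)) * (u t)^2) + exp (2 * z t) * (w t)^2
      = - ((exp (- z t) * u t)^2) + (exp (z t) * w t)^2"
    unfolding power2_exp_mult by simp
  then show "((\<lambda>t. sol_translate (- snd (snd (\<gamma> t))) (\<gamma>' t)) has_vector_derivative
      Sigma_field (sol_translate (- snd (snd (\<gamma> t))) (\<gamma>' t))) (at t)"
    using has_vector_derivative_tripleI[OF x' y' d(3)]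
    unfolding sol_translate_def Sigma_field_def z_def[symmetric] u_def[symmetric] w_def[symmetric]
      r_def[symmetric] fst_conv snd_conv prod.case
    by (simp only: mult.assoc minus_minus)
qed

lemma sol_geodesic_of_Sigma_integral_curve:
  assumes v: "Sigma_integral_curve v"
    and \<gamma>: "\<And>t. (\<gamma> has_vector_derivative sol_translate (snd (snd (\<gamma> t))) (v t)) (at t)"
  shows "sol_geodesic \<gamma> (\<lambda>t. sol_translate (snd (snd (\<gamma> t))) (v t))"
  unfolding sol_geodesic_def
proof (intro allI conjI)
  fix t
  define z where "z t = snd (snd (\<gamma> t))" for t
  define a where "a t = fst (v t)" for t
  define b where "b t = fst (snd (v t))" for t
  define c where "c t = snd (snd (v t))" for t
  have z': "(z has_real_derivative c t) (at t)"
    using has_vector_derivative_triple_D(3)[OF \<gamma>[of t]]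
    unfolding z_def c_def sol_translate_def by simp
  note d = Sigma_integral_curve_component_D[OF v, folded a_def b_def c_def]
  have x': "((\<lambda>t. exp (z t) * a t) has_real_derivative 2 * (exp (z t) * a t) * c t) (at t)"
    using z' d(1) by (auto intro!: derivative_eq_intros simp: algebra_simps)
  have y': "((\<lambda>t. exp (- z t) * b t) has_real_derivative - (2 * (exp (- z t) * b t) * c t)) (at t)"
    using z' d(2) by (auto intro!: derivative_eq_intros simp: algebra_simps)
  have "exp (- (2 * z t)) * (exp (z t) * a t)^2 = (a t)^2"
    and "exp (2 * z t) * (exp (- z t) * b t)^2 = (b t)^2"
    unfolding power2_exp_mult by (simp_all add: exp_minus)
  then show "((\<lambda>t. sol_translate (snd (snd (\<gamma> t))) (v t)) has_vector_derivative
      sol_geo_acc (\<gamma> t) (sol_translate (snd (snd (\<gamma> t))) (v t))) (at t)"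
    using has_vector_derivative_tripleI[OF x' y' d(3)]
    unfolding sol_translate_def sol_geo_acc_eq z_def[symmetric] a_def[symmetric] b_def[symmetric]
      c_def[symmetric] fst_conv snd_conv
    by (simp only: mult.assoc)
qed (fact \<gamma>)

lemma sol_geodesic_unique:
  assumes g1: "sol_geodesic \<gamma>\<^sub>1 \<gamma>\<^sub>1'" and g2: "sol_geodesic \<gamma>\<^sub>2 \<gamma>\<^sub>2'"
    and "\<gamma>\<^sub>1 0 = \<gamma>\<^sub>2 0" "\<gamma>\<^sub>1' 0 = \<gamma>\<^sub>2' 0"
  shows "\<gamma>\<^sub>1 t = \<gamma>\<^sub>2 t"
proof -
  have d1: "(\<gamma>\<^sub>1 has_vector_derivative \<gamma>\<^sub>1' s) (at s)"
    and d2: "(\<gamma>\<^sub>2 has_vector_derivative \<gamma>\<^sub>2' s) (at s)" for s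
    using g1 g2 unfolding sol_geodesic_def by auto
  note D1 = has_vector_derivative_triple_D[OF d1]
  note D2 = has_vector_derivative_triple_D[OF d2]
  have frame: "sol_translate (- snd (snd (\<gamma>\<^sub>1 s))) (\<gamma>\<^sub>1' s)
      = sol_translate (- snd (snd (\<gamma>\<^sub>2 s))) (\<gamma>\<^sub>2' s)" for s
    using Sigma_integral_curve_unique[OF Sigma_integral_curve_sol_geodesic[OF g1]
        Sigma_integral_curve_sol_geodesic[OF g2]] assms(3,4) by simp
  have z: "snd (snd (\<gamma>\<^sub>1 s)) = snd (snd (\<gamma>\<^sub>2 s))" for s
  proof (rule has_real_derivative_eq_imp_eq[OF D1(3)])
    show "((\<lambda>s. snd (snd (\<gamma>\<^sub>2 s))) has_real_derivative snd (snd (\<gamma>\<^sub>1' s))) (at s)" for s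
      using D2(3)[of s] frame[of s] by (simp add: sol_translate_def)
  qed (simp add: assms(3))
  have "\<gamma>\<^sub>1' s = \<gamma>\<^sub>2' s" for s
    using arg_cong[OF frame[of s], of "sol_translate (snd (snd (\<gamma>\<^sub>1 s)))"] z[of s] by simp
  then have "fst (\<gamma>\<^sub>1 t) = fst (\<gamma>\<^sub>2 t)" "fst (snd (\<gamma>\<^sub>1 t)) = fst (snd (\<gamma>\<^sub>2 t))"
    using has_real_derivative_eq_imp_eq[of "\<lambda>s. fst (\<gamma>\<^sub>1 s)" "\<lambda>s. fst (\<gamma>\<^sub>1' s)" "\<lambda>s. fst (\<gamma>\<^sub>2 s)"]
      has_real_derivative_eq_imp_eq[of "\<lambda>s. fst (snd (\<gamma>\<^sub>1 s))" "\<lambda>s. fst (snd (\<gamma>\<^sub>1' s))"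
        "\<lambda>s. fst (snd (\<gamma>\<^sub>2 s))"]
      D1(1,2) D2(1,2) assms(3) by simp_all
  then show ?thesis using z[of t] by (simp add: prod_eq_iff)
qed

lemma sol_exp_eqI:
  assumes "sol_geodesic \<gamma> \<gamma>'" "\<gamma> 0 = 0" "\<gamma>' 0 = V"
  shows "sol_exp V = \<gamma> 1"
  unfolding sol_exp_def
proof (rule the_equality)
  show "\<exists>\<gamma>\<^sub>1 \<gamma>\<^sub>1'. \<gamma>\<^sub>1 0 = 0 \<and> \<gamma>\<^sub>1' 0 = V \<and> (\<forall>t. (\<gamma>\<^sub>1 has_vector_derivative \<gamma>\<^sub>1' t) (at t) \<and>
      (\<gamma>\<^sub>1' has_vector_derivative sol_geo_acc (\<gamma>\<^sub>1 t) (\<gamma>\<^sub>1' t)) (at t)) \<and> \<gamma>\<^sub>1 1 = \<gamma> 1"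
    using assms unfolding sol_geodesic_def by blast
next
  fix q
  assume "\<exists>\<gamma>\<^sub>1 \<gamma>\<^sub>1'. \<gamma>\<^sub>1 0 = 0 \<and> \<gamma>\<^sub>1' 0 = V \<and> (\<forall>t. (\<gamma>\<^sub>1 has_vector_derivative \<gamma>\<^sub>1' t) (at t) \<and>
      (\<gamma>\<^sub>1' has_vector_derivative sol_geo_acc (\<gamma>\<^sub>1 t) (\<gamma>\<^sub>1' t)) (at t)) \<and> \<gamma>\<^sub>1 1 = q"
  then obtain \<gamma>\<^sub>1 \<gamma>\<^sub>1' where "sol_geodesic \<gamma>\<^sub>1 \<gamma>\<^sub>1'" "\<gamma>\<^sub>1 0 = 0" "\<gamma>\<^sub>1' 0 = V" "\<gamma>\<^sub>1 1 = q"
    unfolding sol_geodesic_def by blast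
  then show "q = \<gamma> 1" using sol_geodesic_unique[OF _ assms(1)] assms(2,3) by metis
qed

definition loop_x_primitive :: "real \<Rightarrow> real \<Rightarrow> real" where
  "loop_x_primitive k = primitive (\<lambda>\<theta>. (fst (loop_point k \<theta>))^2 / loop_speed k \<theta>)"

definition loop_y_primitive :: "real \<Rightarrow> real \<Rightarrow> real" where
  "loop_y_primitive k = primitive (\<lambda>\<theta>. (fst (snd (loop_point k \<theta>)))^2 / loop_speed k \<theta>)"

text \<open>The geodesic with initial velocity \<open>s \<cdot> loop_point k \<theta>\<^sub>0\<close>: in the left-invariant frame its
  velocity is \<open>t \<mapsto> s \<cdot> loop_flow k \<theta>\<^sub>0 (s t)\<close>, and the three coordinates below integrate this.\<close>
definition loop_geodesic :: "real \<Rightarrow> real \<Rightarrow> real \<Rightarrow> real \<Rightarrow> vec3" where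
  "loop_geodesic k \<theta>\<^sub>0 s t =
    ((loop_x_primitive k (loop_angle k (s * t + loop_time k \<theta>\<^sub>0)) - loop_x_primitive k \<theta>\<^sub>0)
        / fst (loop_point k \<theta>\<^sub>0),
     (loop_y_primitive k (loop_angle k (s * t + loop_time k \<theta>\<^sub>0)) - loop_y_primitive k \<theta>\<^sub>0)
        / fst (snd (loop_point k \<theta>\<^sub>0)),
     ln (fst (loop_flow k \<theta>\<^sub>0 (s * t)) / fst (loop_point k \<theta>\<^sub>0)))"

context loop_level
begin

lemma continuous_on_loop_speed: "continuous_on UNIV (loop_speed k)"
  using DERIV_isCont[OF loop_speed_has_real_derivative] continuous_at_imp_continuous_on by blast

lemma loop_x_primitive_has_real_derivative:
  "(loop_x_primitive k has_real_derivative (fst (loop_point k \<theta>))^2 / loop_speed k \<theta>) (at \<theta>)"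
  and loop_y_primitive_has_real_derivative:
  "(loop_y_primitive k has_real_derivative (fst (snd (loop_point k \<theta>)))^2 / loop_speed k \<theta>) (at \<theta>)"
  unfolding loop_x_primitive_def loop_y_primitive_def
  by (rule primitive_has_real_derivative,
      use continuous_on_loop_speed loop_speed_pos in \<open>auto simp: loop_point_def
        intro!: continuous_intros simp: less_imp_neq[symmetric]\<close>)+

lemma loop_y_primitive_strict_mono: "strict_mono (loop_y_primitive k)"
proof (rule strict_monoI)
  fix x y :: real
  assume "x < y"
  then show "loop_y_primitive k x < loop_y_primitive k y"
  proof (rule DERIV_pos_imp_increasing)
    fix z
    show "\<exists>d. (loop_y_primitive k has_real_derivative d) (at z) \<and> 0 < d"
      using loop_point_pos(2)[of z] loop_speed_pos[of z]
      by (intro exI[of _ "(fst (snd (loop_point k z)))^2 / loop_speed k z"] conjI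
          loop_y_primitive_has_real_derivative) auto
  qed
qed

lemma loop_primitives_along_loop_flow:
  "((\<lambda>t. loop_x_primitive k (loop_angle k (s * t + loop_time k \<theta>\<^sub>0))) has_real_derivative
    s * (fst (loop_flow k \<theta>\<^sub>0 (s * t)))^2) (at t)"
  "((\<lambda>t. loop_y_primitive k (loop_angle k (s * t + loop_time k \<theta>\<^sub>0))) has_real_derivative
    s * (fst (snd (loop_flow k \<theta>\<^sub>0 (s * t))))^2) (at t)"
  using DERIV_chain2[OF loop_x_primitive_has_real_derivative
      loop_angle_affine_has_real_derivative[of s "loop_time k \<theta>\<^sub>0" t]]
    DERIV_chain2[OF loop_y_primitive_has_real_derivative
      loop_angle_affine_has_real_derivative[of s "loop_time k \<theta>\<^sub>0" t]]
    loop_speed_pos[of "loop_angle k (s * t + loop_time k \<theta>\<^sub>0)"]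
  by (simp_all add: loop_flow_def mult.commute)

lemma loop_geodesic_has_vector_derivative:
  "(loop_geodesic k \<theta>\<^sub>0 s has_vector_derivative
     sol_translate (snd (snd (loop_geodesic k \<theta>\<^sub>0 s t))) (s *\<^sub>R loop_flow k \<theta>\<^sub>0 (s * t))) (at t)"
proof -
  define x\<^sub>0 where "x\<^sub>0 = fst (loop_point k \<theta>\<^sub>0)"
  define y\<^sub>0 where "y\<^sub>0 = fst (snd (loop_point k \<theta>\<^sub>0))"
  define A where "A \<tau> = fst (loop_flow k \<theta>\<^sub>0 \<tau>)" for \<tau>
  define B where "B \<tau> = fst (snd (loop_flow k \<theta>\<^sub>0 \<tau>))" for \<tau>
  define C where "C \<tau> = snd (snd (loop_flow k \<theta>\<^sub>0 \<tau>))" for \<tau>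
  have x\<^sub>0: "x\<^sub>0 > 0" and y\<^sub>0: "y\<^sub>0 > 0" and A: "A (s * t) > 0"
    using loop_point_pos unfolding x\<^sub>0_def y\<^sub>0_def A_def loop_flow_def by auto
  have "A (s * t) * B (s * t) = x\<^sub>0 * y\<^sub>0"
    using loop_point_mult unfolding A_def B_def x\<^sub>0_def y\<^sub>0_def loop_flow_def by simp
  then have B: "B (s * t) / y\<^sub>0 = exp (- ln (A (s * t) / x\<^sub>0))"
    using A x\<^sub>0 y\<^sub>0 by (simp add: exp_minus field_simps)
  have "((\<lambda>t. A (s * t)) has_real_derivative A (s * t) * C (s * t) * s) (at t)"
    using DERIV_chain2[OF Sigma_integral_curve_component_D(1)[OF Sigma_integral_curve_loop_flow]
      DERIV_cmult_Id] unfolding A_def C_def by simp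
  then have z': "((\<lambda>t. ln (A (s * t) / x\<^sub>0)) has_real_derivative s * C (s * t)) (at t)"
    using A x\<^sub>0 by (auto intro!: derivative_eq_intros simp: field_simps)
  have x': "((\<lambda>t. (loop_x_primitive k (loop_angle k (s * t + loop_time k \<theta>\<^sub>0))
      - loop_x_primitive k \<theta>\<^sub>0) / x\<^sub>0) has_real_derivative
      exp (ln (A (s * t) / x\<^sub>0)) * (s * A (s * t))) (at t)"
    using loop_primitives_along_loop_flow(1)[of s \<theta>\<^sub>0 t] A x\<^sub>0 unfolding A_def[symmetric]
    by (auto intro!: derivative_eq_intros simp: power2_eq_square)
  have y': "((\<lambda>t. (loop_y_primitive k (loop_angle k (s * t + loop_time k \<theta>\<^sub>0))
      - loop_y_primitive k \<theta>\<^sub>0) / y\<^sub>0) has_real_derivative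
      exp (- ln (A (s * t) / x\<^sub>0)) * (s * B (s * t))) (at t)"
    using loop_primitives_along_loop_flow(2)[of s \<theta>\<^sub>0 t] y\<^sub>0 unfolding B_def[symmetric] B[symmetric]
    by (auto intro!: derivative_eq_intros simp: power2_eq_square)
  show ?thesis
    using has_vector_derivative_tripleI[OF x' y' z']
    unfolding loop_geodesic_def sol_translate_def x\<^sub>0_def[symmetric] y\<^sub>0_def[symmetric]
      A_def[symmetric] B_def[symmetric] C_def[symmetric] fst_conv snd_conv scaleR_prod_def
    by (simp add: A_def B_def C_def)
qed

lemma sol_geodesic_loop_geodesic:
  "sol_geodesic (loop_geodesic k \<theta>\<^sub>0 s)
     (\<lambda>t. sol_translate (snd (snd (loop_geodesic k \<theta>\<^sub>0 s t))) (s *\<^sub>R loop_flow k \<theta>\<^sub>0 (s * t)))"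
  by (rule sol_geodesic_of_Sigma_integral_curve[OF
        Sigma_integral_curve_rescale[OF Sigma_integral_curve_loop_flow]
          loop_geodesic_has_vector_derivative])

lemma sol_exp_loop_point: "sol_exp (s *\<^sub>R loop_point k \<theta>\<^sub>0) = loop_geodesic k \<theta>\<^sub>0 s 1"
proof (rule sol_exp_eqI[OF sol_geodesic_loop_geodesic])
  have "loop_geodesic k \<theta>\<^sub>0 s 0 = 0"
    using loop_point_pos[of \<theta>\<^sub>0]
      by (simp add: loop_geodesic_def loop_angle_time loop_flow_0 zero_prod_def)
  then show "loop_geodesic k \<theta>\<^sub>0 s 0 = 0"
    and "sol_translate (snd (snd (loop_geodesic k \<theta>\<^sub>0 s 0))) (s *\<^sub>R loop_flow k \<theta>\<^sub>0 (s * 0))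
      = s *\<^sub>R loop_point k \<theta>\<^sub>0"
    by (simp_all add: loop_flow_0 zero_prod_def)
qed

end

section \<open>Estimating the \<open>y\<close>-coordinate of the geodesics\<close>

context loop_level
begin

definition loop_y :: "real \<Rightarrow> real" where "loop_y \<theta> = fst (snd (loop_point k \<theta>))"

definition y_min :: real where "y_min = (loop_major k - loop_radius k) / 2"
definition y_max :: real where "y_max = (loop_major k + loop_radius k) / 2"

lemma loop_y_eq: "loop_y \<theta> = (loop_speed k \<theta> + loop_radius k * cos \<theta>) / 2"
  by (simp add: loop_y_def loop_point_def)

lemma loop_y_pos: "loop_y \<theta> > 0"
  using loop_point_pos(2) by (simp add: loop_y_def)

lemma y_min_pos: "y_min > 0"
  using k_pos k_less by (simp add: y_min_def loop_major_def loop_radius_def)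

lemma y_min_mult_y_max: "y_min * y_max = k"
proof -
  have "y_min * y_max = ((loop_major k)^2 - (loop_radius k)^2) / 4"
    by (simp add: y_min_def y_max_def power2_eq_square field_simps)
  then show ?thesis unfolding power2_loop_major power2_loop_radius by simp
qed

lemma power2_y_min_add_power2_y_max: "y_min^2 + y_max^2 = 1"
proof -
  have "y_min^2 + y_max^2 = ((loop_major k)^2 + (loop_radius k)^2) / 2"
    by (simp add: y_min_def y_max_def power2_eq_square field_simps)
  then show ?thesis unfolding power2_loop_major power2_loop_radius by simp
qed

lemma y_min_le: "y_min \<le> 2 * k"
proof -
  have "1 \<le> loop_major k" using k_pos by (simp add: loop_major_def)
  then have "y_max \<ge> 1 / 2" using loop_radius_pos by (simp add: y_max_def)
  then have "y_min = k / y_max" using y_min_mult_y_max by (simp add: field_simps)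
  also have "\<dots> \<le> k / (1 / 2)" using \<open>y_max \<ge> 1 / 2\<close> k_pos by (intro divide_left_mono) auto
  finally show ?thesis by simp
qed

lemma loop_y_pi: "loop_y pi = y_min"
proof -
  have "(loop_speed k pi)^2 = (loop_major k)^2"
    unfolding power2_loop_speed power2_loop_major power2_loop_radius by simp
  then have "loop_speed k pi = loop_major k"
    using loop_speed_pos[of pi] loop_major_pos by (simp add: power2_eq_iff_nonneg)
  then show ?thesis by (simp add: loop_y_eq y_min_def)
qed

text \<open>The left-hand side is nonnegative, so \<open>y\<close> ranges over \<open>[y_min, y_max]\<close>, strictly inside
  on \<open>(0, pi)\<close>.\<close>
lemma loop_y_identity:
  "(loop_radius k * sin \<theta>)^2 * (loop_y \<theta>)^2 = ((loop_y \<theta>)^2 - y_min^2) * (y_max^2 - (loop_y \<theta>)^2)"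
proof -
  define x where "x = fst (loop_point k \<theta>)"
  define y where "y = loop_y \<theta>"
  define p where "p = loop_radius k * cos \<theta>"
  have xy: "x * y = k" unfolding x_def y_def loop_y_def by (rule loop_point_mult)
  have "x^2 + y^2 = ((loop_speed k \<theta>)^2 + p^2) / 2"
    unfolding x_def y_def loop_y_def loop_point_def p_def
      by (simp add: power2_eq_square field_simps)
  then have sq: "x^2 + y^2 = 2 * k + p^2"
    unfolding power2_loop_speed p_def by (simp add: power_mult_distrib)
  have "(loop_radius k * sin \<theta>)^2 = 1 - 2 * k - p^2"
    unfolding p_def power_mult_distrib power2_loop_radius using sin_cos_squared_add[of \<theta>] by algebra
  moreover have "(y^2 - y_min^2) * (y_max^2 - y^2) = y^2 - y^4 - k^2"
    using power2_y_min_add_power2_y_max y_min_mult_y_max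
    by (simp add: algebra_simps power2_eq_square power4_eq_xxxx) algebra
  moreover have "k^2 = x^2 * y^2" using xy by (simp add: power_mult_distrib[symmetric])
  ultimately show ?thesis
    using sq unfolding y_def[symmetric]
      by (simp add: algebra_simps power2_eq_square power4_eq_xxxx) algebra
qed

lemma loop_y_bounds:
  assumes "0 < \<theta>" "\<theta> < pi"
  shows "y_min^2 < (loop_y \<theta>)^2" "(loop_y \<theta>)^2 < y_max^2"
proof -
  have "(loop_radius k * sin \<theta>)^2 * (loop_y \<theta>)^2 > 0"
    using loop_radius_pos sin_gt_zero[OF assms] loop_y_pos[of \<theta>] by simp
  then have "((loop_y \<theta>)^2 - y_min^2) * (y_max^2 - (loop_y \<theta>)^2) > 0"
    unfolding loop_y_identity .
  moreover have "y_min < y_max" using loop_radius_pos by (simp add: y_min_def y_max_def)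
  then have "y_min^2 < y_max^2" using y_min_pos by (simp add: power_strict_mono)
  ultimately show "y_min^2 < (loop_y \<theta>)^2" "(loop_y \<theta>)^2 < y_max^2"
    by (auto simp: zero_less_mult_iff)
qed

lemma loop_y_has_real_derivative:
  "(loop_y has_real_derivative - (loop_radius k * sin \<theta>) * loop_y \<theta> / loop_speed k \<theta>) (at \<theta>)"
proof -
  have "(loop_y has_real_derivative
      (- ((loop_radius k)^2 * sin \<theta> * cos \<theta>) / loop_speed k \<theta> + loop_radius k * (- sin \<theta>)) / 2)
        (at \<theta>)"
    unfolding loop_y_eq[abs_def]
      by (auto intro!: derivative_eq_intros loop_speed_has_real_derivative)
  then show ?thesis
    unfolding loop_y_eq using loop_speed_pos[of \<theta>] by (simp add: field_simps power2_eq_square)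
qed

lemma loop_y_primitive_reflect:
  "loop_y_primitive k (2 * pi - \<theta>) + loop_y_primitive k \<theta> = 2 * loop_y_primitive k pi"
proof -
  have "loop_speed k (2 * pi - x) = loop_speed k x" for x
    by (simp add: loop_speed_def ellipse_norm_def)
  then have symmetric: "(fst (snd (loop_point k (2 * pi - x))))^2 / loop_speed k (2 * pi - x)
      = (fst (snd (loop_point k x)))^2 / loop_speed k x" for x
    by (simp add: loop_point_def)
  have "\<forall>x. ((\<lambda>\<theta>. loop_y_primitive k (2 * pi - \<theta>) + loop_y_primitive k \<theta>) has_real_derivative 0)
    (at x)"
  proof
    fix x
    have "((\<lambda>\<theta>. loop_y_primitive k (2 * pi - \<theta>) + loop_y_primitive k \<theta>) has_real_derivative
        (fst (snd (loop_point k (2 * pi - x))))^2 / loop_speed k (2 * pi - x) * (-1)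
        + (fst (snd (loop_point k x)))^2 / loop_speed k x) (at x)"
      by (rule derivative_eq_intros DERIV_chain2[OF loop_y_primitive_has_real_derivative]
          loop_y_primitive_has_real_derivative | simp)+
    then show "((\<lambda>\<theta>. loop_y_primitive k (2 * pi - \<theta>) + loop_y_primitive k \<theta>)
        has_real_derivative 0) (at x)"
      unfolding symmetric by simp
  qed
  from DERIV_isconst_all[OF this, of \<theta> pi] show ?thesis by simp
qed

definition y_gap :: real where "y_gap = sqrt (y_max^2 - y_min^2)"
definition y_above :: "real \<Rightarrow> real" where "y_above \<theta> = sqrt ((loop_y \<theta>)^2 - y_min^2)"
definition y_below :: "real \<Rightarrow> real" where "y_below \<theta> = sqrt (y_max^2 - (loop_y \<theta>)^2)"

text \<open>On \<open>(0, pi)\<close> the identity above turns \<open>d loop_y_primitive\<close> into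
  \<open>- y^2 dy / sqrt ((y^2 - y_min^2) (y_max^2 - y^2))\<close>; the majorant comes from the pointwise bound
  \<open>y \<le> y_above + y_min (y_above + y_below) / y_gap\<close>.\<close>
definition loop_y_majorant :: "real \<Rightarrow> real" where
  "loop_y_majorant \<theta> = (y_gap - y_below \<theta>) + y_min / y_gap * (y_above \<theta> + y_gap - y_below \<theta>)"

lemma power2_y_gap: "y_gap^2 = y_max^2 - y_min^2" "y_gap^2 = loop_radius k * loop_major k"
  and y_gap_pos: "y_gap > 0"
proof -
  have "y_max^2 - y_min^2 = loop_radius k * loop_major k"
    by (simp add: y_min_def y_max_def power2_eq_square field_simps)
  moreover have "loop_radius k * loop_major k > 0" using loop_radius_pos loop_major_pos by simp
  ultimately show "y_gap^2 = y_max^2 - y_min^2" "y_gap^2 = loop_radius k * loop_major k" "y_gap > 0"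
    by (simp_all add: y_gap_def)
qed

lemma y_gap_le_1: "y_gap \<le> 1"
proof -
  have "y_gap^2 \<le> 1"
    unfolding power2_y_gap(1) using power2_y_min_add_power2_y_max zero_le_power2[of y_min]
      by linarith
  then show ?thesis using power2_le_imp_le[of y_gap 1] by simp
qed

lemma y_gap_ge: "1 - 2 * k \<le> y_gap"
proof -
  have "1 - 2 * k \<le> sqrt (1 - 2 * k)"
    using k_pos k_less by (intro real_le_rsqrt) (simp add: power2_eq_square mult_le_cancel_right1)
  also have "\<dots> \<le> loop_radius k * loop_major k"
    using loop_radius_pos k_pos by (simp add: loop_radius_def loop_major_def)
  also have "\<dots> = y_gap^2" by (simp add: power2_y_gap(2))
  also have "\<dots> \<le> y_gap" using y_gap_le_1 y_gap_pos
    by (simp add: power2_eq_square mult_le_cancel_right1)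
  finally show ?thesis .
qed

lemma inverse_y_gap_le:
  assumes "k \<le> 1 / 4"
  shows "1 / y_gap \<le> 1 + 4 * k"
proof -
  have "1 / y_gap \<le> 1 / (1 - 2 * k)"
    using y_gap_ge assms by (intro divide_left_mono) auto
  also have "\<dots> \<le> 1 + 4 * k"
    using assms k_pos by (simp add: divide_le_eq algebra_simps)
  finally show ?thesis .
qed

lemma loop_y_majorant_pi: "loop_y_majorant pi = 0"
  by (simp add: loop_y_majorant_def y_above_def y_below_def loop_y_pi y_gap_def)

context
  fixes \<theta> :: real
  assumes \<theta>: "0 < \<theta>" "\<theta> < pi"
begin

lemma y_above_y_below:
  shows "y_above \<theta> > 0" "y_below \<theta> > 0"
    and "(y_above \<theta>)^2 = (loop_y \<theta>)^2 - y_min^2" "(y_below \<theta>)^2 = y_max^2 - (loop_y \<theta>)^2"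
  using loop_y_bounds[OF \<theta>] by (simp_all add: y_above_def y_below_def)

lemma loop_y_le_1: "loop_y \<theta> \<le> 1"
proof -
  have "(loop_y \<theta>)^2 \<le> 1"
    using loop_y_bounds[OF \<theta>] power2_y_min_add_power2_y_max zero_le_power2[of y_min] by linarith
  then show ?thesis using power2_le_imp_le[of "loop_y \<theta>" 1] by simp
qed

lemma y_above_le: "y_above \<theta> \<le> loop_y \<theta>"
  by (rule power2_le_imp_le) (use y_above_y_below(3) loop_y_pos[of \<theta>] in auto)

lemma y_gap_minus_y_below_le: "y_gap - y_below \<theta> \<le> loop_y \<theta> / y_gap"
proof -
  note uv = y_above_y_below
  have "(y_gap - y_below \<theta>) * (y_gap + y_below \<theta>) = (loop_y \<theta>)^2 - y_min^2"
    using power2_y_gap(1) uv(4) by (simp add: algebra_simps power2_eq_square)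
  also have "\<dots> \<le> loop_y \<theta>"
  proof -
    have "(loop_y \<theta>)^2 \<le> loop_y \<theta> * 1"
      unfolding power2_eq_square by (rule mult_left_mono[OF loop_y_le_1])
        (use loop_y_pos[of \<theta>] in simp)
    then show ?thesis using zero_le_power2[of y_min] by linarith
  qed
  finally have product: "(y_gap - y_below \<theta>) * (y_gap + y_below \<theta>) \<le> loop_y \<theta>" .
  have "y_below \<theta> < y_gap"
    by (rule power2_less_imp_less)
      (use uv(4) power2_y_gap(1) loop_y_bounds(1)[OF \<theta>] y_gap_pos in auto)
  then have "(y_gap - y_below \<theta>) * y_gap \<le> (y_gap - y_below \<theta>) * (y_gap + y_below \<theta>)"
    using uv by (intro mult_left_mono) auto
  with product have "(y_gap - y_below \<theta>) * y_gap \<le> loop_y \<theta>" by linarith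
  then show ?thesis using y_gap_pos by (simp add: field_simps)
qed

lemma loop_y_majorant_le:
  assumes "k \<le> 1 / 4"
  shows "loop_y_majorant \<theta> \<le> (1 + 16 * k) * loop_y \<theta>"
proof -
  define r where "r = 1 / y_gap"
  have r: "0 < r" "r \<le> 1 + 4 * k"
    using y_gap_pos inverse_y_gap_le[OF assms] unfolding r_def by auto
  have "y_min * r \<le> 2 * k * (1 + 4 * k)"
    by (rule mult_mono[OF y_min_le r(2)]) (use k_pos r in auto)
  also have "\<dots> \<le> 4 * k" using assms k_pos by (simp add: algebra_simps)
  finally have "y_min * r \<le> 4 * k" .
  moreover have "1 + r \<le> 3" using r assms by linarith
  ultimately have "y_min * r * (1 + r) \<le> 4 * k * 3"
    by (rule mult_mono) (use r k_pos in auto)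
  then have factor: "r + y_min * r * (1 + r) \<le> 1 + 16 * k" using r by linarith
  have "loop_y_majorant \<theta> = (y_gap - y_below \<theta>) + y_min * r * (y_above \<theta> + (y_gap - y_below \<theta>))"
    by (simp add: loop_y_majorant_def r_def)
  also have "\<dots> \<le> loop_y \<theta> * r + y_min * r * (loop_y \<theta> + loop_y \<theta> * r)"
  proof -
    have "y_gap - y_below \<theta> \<le> loop_y \<theta> * r"
      using y_gap_minus_y_below_le unfolding r_def by simp
    moreover have "0 \<le> y_min * r" using y_min_pos r by simp
    ultimately show ?thesis using y_above_le by (intro add_mono mult_left_mono) auto
  qed
  also have "\<dots> = loop_y \<theta> * (r + y_min * r * (1 + r))" by (simp add: algebra_simps)
  also have "\<dots> \<le> loop_y \<theta> * (1 + 16 * k)"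
    using factor loop_y_pos[of \<theta>] by (intro mult_left_mono) auto
  finally show ?thesis by (simp add: mult.commute)
qed

lemma loop_y_le_y_above_y_below:
  shows "loop_y \<theta> \<le> y_above \<theta> + y_min / y_gap * (y_above \<theta> + y_below \<theta>)"
proof -
  note uv = y_above_y_below
  have "y_gap^2 \<le> (y_above \<theta> + y_below \<theta>)^2"
    using uv unfolding power2_y_gap(1) by (simp add: power2_sum)
  then have "y_gap \<le> y_above \<theta> + y_below \<theta>"
    using uv y_gap_pos by (simp add: power2_le_iff_abs_le)
  then have "y_min * y_gap \<le> y_min * (y_above \<theta> + y_below \<theta>)"
    using y_min_pos by simp
  then have "y_min \<le> y_min / y_gap * (y_above \<theta> + y_below \<theta>)"
    using y_gap_pos by (simp add: field_simps)
  moreover have "(loop_y \<theta>)^2 \<le> (y_above \<theta> + y_min)^2"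
    using uv y_min_pos by (simp add: power2_sum)
  then have "loop_y \<theta> \<le> y_above \<theta> + y_min"
    using uv y_min_pos loop_y_pos[of \<theta>] by (simp add: power2_le_iff_abs_le)
  ultimately show ?thesis by linarith
qed

lemma power2_loop_y_has_real_derivative:
  "((\<lambda>\<theta>. (loop_y \<theta>)^2) has_real_derivative
    - 2 * (y_above \<theta> * y_below \<theta>) * loop_y \<theta> / loop_speed k \<theta>) (at \<theta>)"
proof -
  define y where "y = loop_y \<theta>"
  define c where "c = loop_radius k * sin \<theta>"
  have "(c * y)^2 = (y_above \<theta> * y_below \<theta>)^2"
    unfolding power_mult_distrib y_above_y_below(3,4) c_def y_def loop_y_identity[symmetric] by simp
  moreover have "c > 0" unfolding c_def using loop_radius_pos sin_gt_zero[OF \<theta>] by simp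
  ultimately have "c * y = y_above \<theta> * y_below \<theta>"
    using loop_y_pos[of \<theta>] y_above_y_below(1,2) unfolding y_def by (simp add: power2_eq_iff_nonneg)
  moreover have "((\<lambda>\<theta>. (loop_y \<theta>)^2) has_real_derivative - 2 * (c * y) * y / loop_speed k \<theta>) (at \<theta>)"
    unfolding y_def c_def
      by (auto intro!: derivative_eq_intros loop_y_has_real_derivative simp: algebra_simps)
  ultimately show ?thesis unfolding y_def by simp
qed

lemma y_above_has_real_derivative:
  "(y_above has_real_derivative - (y_below \<theta> * loop_y \<theta> / loop_speed k \<theta>)) (at \<theta>)"
  using sqrt_has_real_derivative[OF
    DERIV_diff[OF power2_loop_y_has_real_derivative DERIV_const[of "y_min^2"]]]
    loop_y_bounds(1)[OF \<theta>] y_above_y_below(1)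
  unfolding y_above_def[abs_def] by (simp add: field_simps)

lemma y_below_has_real_derivative:
  "(y_below has_real_derivative y_above \<theta> * loop_y \<theta> / loop_speed k \<theta>) (at \<theta>)"
  using sqrt_has_real_derivative[OF
    DERIV_diff[OF DERIV_const[of "y_max^2"] power2_loop_y_has_real_derivative]]
    loop_y_bounds(2)[OF \<theta>] y_above_y_below(2)
  unfolding y_below_def[abs_def] by (simp add: field_simps)

lemma loop_y_primitive_add_majorant_deriv_nonpos:
  "\<exists>l. ((\<lambda>\<theta>. loop_y_majorant \<theta> + loop_y_primitive k \<theta>) has_real_derivative l) (at \<theta>) \<and> l \<le> 0"
proof -
  define y where "y = loop_y \<theta>"
  define D where "D = loop_speed k \<theta>"
  define u where "u = y_above \<theta>"
  define v where "v = y_below \<theta>"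
  have D: "D > 0" unfolding D_def by (rule loop_speed_pos)
  have majorant': "((\<lambda>\<theta>. loop_y_majorant \<theta> + loop_y_primitive k \<theta>) has_real_derivative
      (0 - u * y / D) + y_min / y_gap * (- (v * y / D) + 0 - u * y / D) + y^2 / D) (at \<theta>)"
    unfolding loop_y_majorant_def[abs_def] y_def D_def u_def v_def
    by (rule DERIV_add[OF
          DERIV_add[OF DERIV_diff[OF DERIV_const[of y_gap] y_below_has_real_derivative]
            DERIV_cmult[where c="y_min / y_gap", OF DERIV_diff[OF
              DERIV_add[OF y_above_has_real_derivative DERIV_const[of y_gap]]
              y_below_has_real_derivative]]]
          loop_y_primitive_has_real_derivative[of \<theta>, folded loop_y_def]])
  have simplify: "(0 - u * y / D) + b * (- (v * y / D) + 0 - u * y / D) + y^2 / D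
      = (y / D) * (y - (u + b * (u + v)))" for b
    using D by (simp add: field_simps power2_eq_square)
  have "(y / D) * (y - (u + y_min / y_gap * (u + v))) \<le> 0"
    using loop_y_le_y_above_y_below loop_y_pos[of \<theta>] D unfolding y_def u_def v_def
    by (intro mult_nonneg_nonpos) auto
  with majorant'[unfolded simplify] show ?thesis by blast
qed

end

lemma loop_y_primitive_pi_minus_le:
  assumes "0 < \<theta>" "\<theta> < pi"
  shows "loop_y_primitive k pi - loop_y_primitive k \<theta> \<le> loop_y_majorant \<theta>"
proof -
  have "continuous_on UNIV loop_y" "continuous_on UNIV (loop_y_primitive k)"
    using DERIV_isCont[OF loop_y_has_real_derivative]
      DERIV_isCont[OF loop_y_primitive_has_real_derivative]
    by (simp_all add: continuous_at_imp_continuous_on)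
  then have cont: "continuous_on UNIV (\<lambda>\<theta>. loop_y_majorant \<theta> + loop_y_primitive k \<theta>)"
    unfolding loop_y_majorant_def[abs_def] y_above_def[abs_def] y_below_def[abs_def]
    by (intro continuous_intros)
  have "loop_y_majorant pi + loop_y_primitive k pi \<le> loop_y_majorant \<theta> + loop_y_primitive k \<theta>"
  proof (rule DERIV_nonpos_imp_decreasing_open
      [of \<theta> pi "\<lambda>\<theta>. loop_y_majorant \<theta> + loop_y_primitive k \<theta>"])
    show "continuous_on {\<theta>..pi} (\<lambda>\<theta>. loop_y_majorant \<theta> + loop_y_primitive k \<theta>)"
      using cont continuous_on_subset by blast
    fix x
    assume "\<theta> < x" "x < pi"
    then show "\<exists>l. ((\<lambda>\<theta>. loop_y_majorant \<theta> + loop_y_primitive k \<theta>) has_real_derivative l) (at x)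
      \<and> l \<le> 0"
      using assms(1) by (intro loop_y_primitive_add_majorant_deriv_nonpos) auto
  qed (use assms in simp)
  then show ?thesis using loop_y_majorant_pi by simp
qed

end

lemma unit_vec_scaleR: "0 < l \<Longrightarrow> unit_vec (l *\<^sub>R V) = unit_vec V"
  by (simp add: unit_vec_def)

lemma scaleR_norm_unit_vec: "norm V *\<^sub>R unit_vec V = V"
  by (cases "V = 0") (simp_all add: unit_vec_def)

lemma positive_vec_unit_vec:
  assumes "positive_vec V"
  shows "V \<noteq> 0" and "snd (snd (unit_vec V)) > 0"
  using assms by (auto simp: positive_vec_def unit_vec_def zero_prod_def split: prod.splits)

context loop_level
begin

lemma small_symmetric_flowline_end_angle:
  assumes W: "small_symmetric_flowline W"
    and \<theta>: "unit_vec W = loop_point k \<theta>" "0 < \<theta>" "\<theta> < pi"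
  shows "norm W < loop_time k (2 * pi)"
    and "loop_angle k (norm W + loop_time k \<theta>) = 2 * pi - \<theta>"
proof -
  obtain c where c: "unit_vec W \<in> loop_level_set c" "norm W < loop_period c"
    and "W \<noteq> 0" and symmetric: "symmetric_flowline W"
    using W unfolding small_symmetric_flowline_def by blast
  have "c = k" using c(1) loop_point_mult[of \<theta>] unfolding \<theta>(1) loop_level_set_def by auto
  then show period: "norm W < loop_time k (2 * pi)"
    using c(2) loop_period_le_loop_time by simp
  define \<psi> where "\<psi> = loop_angle k (norm W + loop_time k \<theta>)"
  obtain x y z where xyz: "loop_point k \<theta> = (x, y, z)" by (cases "loop_point k \<theta>")
  have "flow_end W = loop_point k \<psi>"
    unfolding flow_end_def \<theta>(1) Sigma_flow_loop_point loop_flow_def \<psi>_def ..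
  then have "loop_point k \<psi> = (x, y, -z)"
    using symmetric xyz unfolding symmetric_flowline_def flow_start_def \<theta>(1)
    by (cases "loop_point k \<psi>") auto
  then obtain n :: int where n: "\<psi> = - \<theta> + 2 * pi * n"
    using loop_point_reflect[OF xyz] by blast
  have "\<theta> < \<psi>"
    using \<open>W \<noteq> 0\<close> loop_angle_less_iff[of "loop_time k \<theta>" "norm W + loop_time k \<theta>"]
    unfolding \<psi>_def loop_angle_time by simp
  moreover have "norm W + loop_time k \<theta> < loop_time k (\<theta> + 2 * pi)"
    using period loop_time_add_2pi by simp
  then have "\<psi> < \<theta> + 2 * pi"
    unfolding \<psi>_def loop_angle_less_iff[symmetric, where t="loop_time k _"] loop_angle_time .
  ultimately have "0 < pi * n" "pi * n < pi * 2" using n \<theta>(2,3) by linarith+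
  then have "n = 1" by (simp add: zero_less_mult_iff)
  then show "loop_angle k (norm W + loop_time k \<theta>) = 2 * pi - \<theta>"
    using n unfolding \<psi>_def by simp
qed

lemma distinguished_sol_exp_y_bounds:
  assumes V: "positive_vec V" "distinguished V" "unit_vec V \<in> loop_level_set k" and "k \<le> 1 / 4"
  shows "0 < fst (snd (sol_exp V))" and "fst (snd (sol_exp V)) \<le> 2 + 32 * k"
proof -
  have "V \<noteq> 0" using positive_vec_unit_vec(1)[OF V(1)] .
  obtain \<theta> where \<theta>: "0 < \<theta>" "\<theta> < pi" "loop_point k \<theta> = unit_vec V"
    using loop_point_surj positive_vec_unit_vec(2)[OF V(1)] V(3) by (metis prod.collapse)
  obtain l where l: "1 \<le> l" "small_symmetric_flowline (l *\<^sub>R V)"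
    using V(2) unfolding distinguished_def by blast
  have "loop_angle k (l * norm V + loop_time k \<theta>) = 2 * pi - \<theta>"
    using small_symmetric_flowline_end_angle(2)[OF l(2)] \<theta> l(1) unit_vec_scaleR[of l V] by simp
  moreover define T where "T = loop_angle k (norm V + loop_time k \<theta>)"
  moreover have "norm V \<le> l * norm V" using mult_right_mono[OF l(1), of "norm V"] by simp
  ultimately have T: "\<theta> < T" "T \<le> 2 * pi - \<theta>"
    using \<open>V \<noteq> 0\<close> loop_angle_less_iff[of "loop_time k \<theta>" "norm V + loop_time k \<theta>"]
      loop_angle_le_iff[of "norm V + loop_time k \<theta>" "l * norm V + loop_time k \<theta>"]
    unfolding loop_angle_time by auto
  have "sol_exp V = loop_geodesic k \<theta> (norm V) 1"
    using sol_exp_loop_point[of "norm V" \<theta>] unfolding \<theta>(3) scaleR_norm_unit_vec .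
  then have b: "fst (snd (sol_exp V)) = (loop_y_primitive k T - loop_y_primitive k \<theta>) / loop_y \<theta>"
    by (simp add: loop_geodesic_def T_def loop_y_def)
  show "0 < fst (snd (sol_exp V))"
    unfolding b using strict_monoD[OF loop_y_primitive_strict_mono T(1)] loop_y_pos[of \<theta>] by simp
  have "fst (snd (sol_exp V)) \<le> (loop_y_primitive k (2 * pi - \<theta>) - loop_y_primitive k \<theta>) / loop_y \<theta>"
    unfolding b using strict_mono_less_eq[OF loop_y_primitive_strict_mono] T(2) loop_y_pos[of \<theta>]
    by (simp add: divide_right_mono)
  also have "\<dots> = 2 * (loop_y_primitive k pi - loop_y_primitive k \<theta>) / loop_y \<theta>"
    using loop_y_primitive_reflect[of \<theta>] by simp
  also have "\<dots> \<le> 2 * ((1 + 16 * k) * loop_y \<theta>) / loop_y \<theta>"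
    using order_trans[OF loop_y_primitive_pi_minus_le[OF \<theta>(1,2)]
        loop_y_majorant_le[OF \<theta>(1,2) assms(4)]] loop_y_pos[of \<theta>]
    by (intro divide_right_mono) auto
  also have "\<dots> = 2 + 32 * k" using loop_y_pos[of \<theta>] by simp
  finally show "fst (snd (sol_exp V)) \<le> 2 + 32 * k" .
qed

end

lemma long_period_sol_exp_y_bounds:
  assumes "0 < \<delta>" "\<delta> \<le> 1 / 4"
    and V: "positive_vec V" "distinguished V" "unit_vec V \<in> loop_level_set c"
    and "0 < c" "c < 1 / 2" "pi / sqrt \<delta> < loop_period c" "sol_exp V = (a, b, d)"
  shows "0 < b" "b \<le> 2 + 32 * \<delta>"
proof -
  interpret loop_level c using assms(6,7) by unfold_locales
  have "pi / sqrt \<delta> < pi / sqrt c"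
    using assms(8) loop_period_le_loop_time loop_time_2pi_le by linarith
  have "sqrt c < sqrt \<delta>"
  proof (rule ccontr)
    assume "\<not> sqrt c < sqrt \<delta>"
    then have "pi / sqrt c \<le> pi / sqrt \<delta>" using assms(1) by (intro divide_left_mono) auto
    with \<open>pi / sqrt \<delta> < pi / sqrt c\<close> show False by simp
  qed
  then have "c < \<delta>" by simp
  then have "0 < b" "b \<le> 2 + 32 * c"
    using distinguished_sol_exp_y_bounds[OF V] assms(2,9) by simp_all
  with \<open>c < \<delta>\<close> show "0 < b" "b \<le> 2 + 32 * \<delta>" by linarith+
qed

theorem theorem6p1:
  shows "\<forall>\<epsilon>>0. \<exists>L\<^sub>0::real. \<forall>(V::vec3) (c::real) (a::real) (b::real) (d::real).
    positive_vec V \<and> distinguished V \<and> 0 < c \<and> c < 1/2 \<and>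
    unit_vec V \<in> loop_level_set c \<and> loop_period c > L\<^sub>0 \<and> sol_exp V = (a, b, d)
    \<longrightarrow> 0 < b \<and> b < 2 + \<epsilon>"
proof (intro allI impI, goal_cases)
  case (1 \<epsilon>)
  define \<delta> where "\<delta> = min (1 / 4) (\<epsilon> / 64)"
  have \<delta>: "0 < \<delta>" "\<delta> \<le> 1 / 4" "2 + 32 * \<delta> < 2 + \<epsilon>" using 1 by (auto simp: \<delta>_def)
  show ?case
    using long_period_sol_exp_y_bounds[OF \<delta>(1,2)] \<delta>(3)
    by (intro exI[of _ "pi / sqrt \<delta>"] allI impI) (meson le_less_trans)
qed

end
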